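(* Let $A$ and $B$ be bounded self-adjoint operators such that $A\ge-\tfrac12$, $B\ge-\tfrac12$ and $A+B\ge-\tfrac12$. Then $$\|\log(\mathrm{id}+A+B)-\log(\mathrm{id}+A)-\log(\mathrm{id}+B)\|\le C\|AB\|$$ for some constant $C$ independent of $A$ and $B$. *)

theory Defs
  imports "HOL-Analysis.Analysis"
begin

definition selfadjoint :: "('a::real_inner \<Rightarrow>\<^sub>L 'a) \<Rightarrow> bool" where
  "selfadjoint A \<longleftrightarrow> (\<forall>x y. inner (blinfun_apply A x) y = inner x (blinfun_apply A y))"

text \<open>Operator inequality  A \<ge> c * id  (in the quadratic form sense).\<close>
definition op_ge_scalar :: "('a::real_inner \<Rightarrow>\<^sub>L 'a) \<Rightarrow> real \<Rightarrow> bool" where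
  "op_ge_scalar A c \<longleftrightarrow> (\<forall>x. inner (blinfun_apply A x) x \<ge> c * (norm x)\<^sup>2)"

fun op_pow :: "('a::real_normed_vector \<Rightarrow>\<^sub>L 'a) \<Rightarrow> nat \<Rightarrow> ('a \<Rightarrow>\<^sub>L 'a)" where
  "op_pow L 0 = id_blinfun"
| "op_pow L (Suc n) = L o\<^sub>L op_pow L n"

definition op_exp :: "('a::banach \<Rightarrow>\<^sub>L 'a) \<Rightarrow> ('a \<Rightarrow>\<^sub>L 'a)" where
  "op_exp L = (\<Sum>n. (1 / fact n) *\<^sub>R op_pow L n)"

text \<open>The (self-adjoint) operator logarithm: the unique self-adjoint L with exp L = X
  (exists and is unique for self-adjoint X \<ge> c > 0).\<close>
definition op_log :: "('a::{real_inner,banach} \<Rightarrow>\<^sub>L 'a) \<Rightarrow> ('a \<Rightarrow>\<^sub>L 'a)" where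
  "op_log X = (THE L. selfadjoint L \<and> op_exp L = X)"

end

theory Submission
  imports Defs
begin

text \<open>For a self-adjoint \<open>Y \<ge> c > 0\<close> put
  \<open>log Y = \<integral>\<^sub>0\<^sup>1 (Y - id) R\<^sub>t(Y) dt\<close> with the resolvents \<open>R\<^sub>t(Y) = (id + t (Y - id))\<^sup>-\<^sup>1\<close>.
  For commuting \<open>Y\<^sub>1, Y\<^sub>2\<close> the resolvent identity gives
  \<open>log Y\<^sub>1 - log Y\<^sub>2 = (Y\<^sub>1 - Y\<^sub>2) \<integral>\<^sub>0\<^sup>1 R\<^sub>t(Y\<^sub>1) R\<^sub>t(Y\<^sub>2) dt\<close>, so along a commuting path
  \<open>(log Y(s))' = Y'(s) Y(s)\<^sup>-\<^sup>1\<close>. On the path \<open>s \<mapsto> exp (s L)\<close> this yields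
  \<open>log (exp L) = L\<close>; on the segment from \<open>X\<close> to \<open>W = exp (log X)\<close>, which have the same
  logarithm, it yields \<open>\<integral>\<^sub>0\<^sup>1 (W - X) (X + s (W - X))\<^sup>-\<^sup>1 ds = 0\<close>, and positivity of the
  inverses forces \<open>W = X\<close>. Hence \<open>log\<close> is the self-adjoint logarithm \<^const>\<open>op_log\<close>.

  With \<open>P, Q, S\<close> the resolvents of \<open>id + A\<close>, \<open>id + B\<close>, \<open>id + A + B\<close>, two resolvent
  identities give \<open>t ((A + B) S - A P - B Q) = - t\<^sup>2 (S B A P Q + P A B Q)\<close>. Since
  \<open>A, B, A + B \<ge> -1/2\<close>, all resolvents on \<open>[0, 1]\<close> have norm \<open>\<le> 2\<close>, and
  \<open>\<parallel>B A\<parallel> = \<parallel>(A B)\<^sup>*\<parallel> = \<parallel>A B\<parallel>\<close>; integrating over \<open>t\<close> gives the bound with \<open>C = 12\<close>.\<close>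

lemma blinfun_compose_assoc: "(a o\<^sub>L b) o\<^sub>L c = a o\<^sub>L (b o\<^sub>L c)"
  by (rule blinfun_eqI) simp

lemma blinfun_compose_add_left: "(a + b) o\<^sub>L c = (a o\<^sub>L c) + (b o\<^sub>L c)"
  by (rule blinfun_eqI) (simp add: blinfun.bilinear_simps)

lemma blinfun_compose_add_right: "c o\<^sub>L (a + b) = (c o\<^sub>L a) + (c o\<^sub>L b)"
  by (rule blinfun_eqI) (simp add: blinfun.bilinear_simps)

lemma blinfun_compose_diff_left: "(a - b) o\<^sub>L c = (a o\<^sub>L c) - (b o\<^sub>L c)"
  by (rule blinfun_eqI) (simp add: blinfun.bilinear_simps)

lemma blinfun_compose_diff_right: "c o\<^sub>L (a - b) = (c o\<^sub>L a) - (c o\<^sub>L b)"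
  by (rule blinfun_eqI) (simp add: blinfun.bilinear_simps)

lemma blinfun_compose_minus_left: "(- a) o\<^sub>L c = - (a o\<^sub>L c)"
  by (rule blinfun_eqI) (simp add: blinfun.bilinear_simps)

lemma blinfun_compose_minus_right: "c o\<^sub>L (- a) = - (c o\<^sub>L a)"
  by (rule blinfun_eqI) (simp add: blinfun.bilinear_simps)

lemma blinfun_compose_scaleR_left: "(r *\<^sub>R a) o\<^sub>L c = r *\<^sub>R (a o\<^sub>L c)"
  by (rule blinfun_eqI) (simp add: blinfun.bilinear_simps)

lemma blinfun_compose_scaleR_right: "c o\<^sub>L (r *\<^sub>R a) = r *\<^sub>R (c o\<^sub>L a)"
  by (rule blinfun_eqI) (simp add: blinfun.bilinear_simps)

lemma blinfun_compose_id_left [simp]: "id_blinfun o\<^sub>L a = a"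
  by (rule blinfun_eqI) simp

lemma blinfun_compose_id_right [simp]: "a o\<^sub>L id_blinfun = a"
  by (rule blinfun_eqI) simp

lemmas blinfun_compose_simps = blinfun_compose_assoc
  blinfun_compose_add_left blinfun_compose_add_right
  blinfun_compose_diff_left blinfun_compose_diff_right
  blinfun_compose_minus_left blinfun_compose_minus_right
  blinfun_compose_scaleR_left blinfun_compose_scaleR_right

lemma bounded_linear_blinfun_compose_left: "bounded_linear (\<lambda>X. A o\<^sub>L X)"
  by (rule bounded_bilinear.bounded_linear_right[OF bounded_bilinear_blinfun_compose])

lemma bounded_linear_blinfun_compose_right: "bounded_linear (\<lambda>X. X o\<^sub>L A)"
  by (rule bounded_bilinear.bounded_linear_left[OF bounded_bilinear_blinfun_compose])

lemma norm_blinfun_compose3: "norm (A o\<^sub>L (B o\<^sub>L C)) \<le> norm A * norm B * norm C"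
proof -
  have "norm (A o\<^sub>L (B o\<^sub>L C)) \<le> norm A * norm (B o\<^sub>L C)"
    by (rule norm_blinfun_compose)
  also have "\<dots> \<le> norm A * (norm B * norm C)"
    by (intro mult_left_mono norm_blinfun_compose) auto
  finally show ?thesis
    by (simp add: mult.assoc)
qed

lemma op_pow_commute: "A o\<^sub>L L = L o\<^sub>L A \<Longrightarrow> A o\<^sub>L op_pow L n = op_pow L n o\<^sub>L A"
proof (induction n)
  case (Suc n)
  have "A o\<^sub>L op_pow L (Suc n) = (A o\<^sub>L L) o\<^sub>L op_pow L n"
    by (simp add: blinfun_compose_assoc)
  also have "\<dots> = L o\<^sub>L (A o\<^sub>L op_pow L n)"
    using Suc by (simp add: blinfun_compose_assoc)
  also have "\<dots> = op_pow L (Suc n) o\<^sub>L A"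
    using Suc by (simp add: blinfun_compose_assoc)
  finally show ?case .
qed simp

lemma norm_op_pow_le: "norm (op_pow L n) \<le> norm L ^ n"
proof (induction n)
  case 0
  then show ?case
    using norm_blinfun_id_le by simp
next
  case (Suc n)
  have "norm (op_pow L (Suc n)) \<le> norm L * norm (op_pow L n)"
    by (simp add: norm_blinfun_compose)
  also have "\<dots> \<le> norm L * norm L ^ n"
    using Suc by (simp add: mult_left_mono)
  finally show ?case
    by simp
qed

section \<open>The unitization of the operator algebra\<close>

text \<open>The operators on \<^typ>\<open>'a\<close> do not form a \<^class>\<open>real_normed_algebra_1\<close>
  (on the trivial space the identity has norm \<open>0\<close>), so the library exponential is used
  on the algebra obtained by formally adjoining a unit: \<open>(a, r)\<close> stands for
  \<open>a + r \<cdot> id\<close>, normed by \<open>\<parallel>a\<parallel> + \<bar>r\<bar>\<close>.\<close>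

typedef (overloaded) 'a unitization =
  "UNIV :: (('a::real_normed_vector \<Rightarrow>\<^sub>L 'a) \<times> real) set"
  by auto

setup_lifting type_definition_unitization

lemma norm_unitization_mult_le:
  fixes a b :: "'a::real_normed_vector \<Rightarrow>\<^sub>L 'a"
  shows "norm ((a o\<^sub>L b) + r *\<^sub>R b + s *\<^sub>R a) + \<bar>r * s\<bar> \<le> (norm a + \<bar>r\<bar>) * (norm b + \<bar>s\<bar>)"
proof -
  have "norm ((a o\<^sub>L b) + r *\<^sub>R b + s *\<^sub>R a) \<le> norm (a o\<^sub>L b) + norm (r *\<^sub>R b) + norm (s *\<^sub>R a)"
    by (intro order_trans[OF norm_triangle_ineq] add_mono) (auto intro: norm_triangle_ineq)
  also have "\<dots> \<le> norm a * norm b + \<bar>r\<bar> * norm b + \<bar>s\<bar> * norm a"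
    using norm_blinfun_compose[of a b] by simp
  finally show ?thesis
    by (simp add: algebra_simps abs_mult)
qed

instantiation unitization :: (real_normed_vector) real_normed_vector
begin

lift_definition zero_unitization :: "'a unitization" is "(0, 0)" .
lift_definition plus_unitization :: "'a unitization \<Rightarrow> 'a unitization \<Rightarrow> 'a unitization"
  is "\<lambda>(a, r) (b, s). (a + b, r + s)" .
lift_definition minus_unitization :: "'a unitization \<Rightarrow> 'a unitization \<Rightarrow> 'a unitization"
  is "\<lambda>(a, r) (b, s). (a - b, r - s)" .
lift_definition uminus_unitization :: "'a unitization \<Rightarrow> 'a unitization"
  is "\<lambda>(a, r). (- a, - r)" .
lift_definition scaleR_unitization :: "real \<Rightarrow> 'a unitization \<Rightarrow> 'a unitization"
  is "\<lambda>c (a, r). (c *\<^sub>R a, c * r)" .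
lift_definition norm_unitization :: "'a unitization \<Rightarrow> real"
  is "\<lambda>(a, r). norm a + \<bar>r\<bar>" .

definition dist_unitization :: "'a unitization \<Rightarrow> 'a unitization \<Rightarrow> real"
  where "dist_unitization u v = norm (u - v)"

definition uniformity_unitization :: "('a unitization \<times> 'a unitization) filter"
  where "uniformity_unitization = (INF e\<in>{0 <..}. principal {(x, y). dist x y < e})"

definition open_unitization :: "'a unitization set \<Rightarrow> bool"
  where "open_unitization S = (\<forall>x\<in>S. \<forall>\<^sub>F (x', y) in uniformity. x' = x \<longrightarrow> y \<in> S)"

definition sgn_unitization :: "'a unitization \<Rightarrow> 'a unitization"
  where "sgn_unitization u = inverse (norm u) *\<^sub>R u"

instance
proof
  fix u v w :: "'a unitization" and r s :: real and S :: "'a unitization set"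
  show "u + v + w = u + (v + w)" by transfer auto
  show "u + v = v + u" by transfer auto
  show "0 + u = u" by transfer auto
  show "- u + u = 0" by transfer auto
  show "u - v = u + - v" by transfer auto
  show "r *\<^sub>R (u + v) = r *\<^sub>R u + r *\<^sub>R v" by transfer (auto simp: algebra_simps)
  show "(r + s) *\<^sub>R u = r *\<^sub>R u + s *\<^sub>R u" by transfer (auto simp: algebra_simps)
  show "r *\<^sub>R s *\<^sub>R u = (r * s) *\<^sub>R u" by transfer auto
  show "1 *\<^sub>R u = u" by transfer auto
  show "dist u v = norm (u - v)" by (simp add: dist_unitization_def)
  show "sgn u = inverse (norm u) *\<^sub>R u" by (simp add: sgn_unitization_def)
  show "(uniformity :: ('a unitization \<times> 'a unitization) filter) =
      (INF e\<in>{0 <..}. principal {(x, y). dist x y < e})"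
    by (simp add: uniformity_unitization_def)
  show "open S = (\<forall>x\<in>S. \<forall>\<^sub>F (x', y) in uniformity. x' = x \<longrightarrow> y \<in> S)"
    by (simp add: open_unitization_def)
  show "(norm u = 0) = (u = 0)"
    by transfer (auto simp: add_nonneg_eq_0_iff)
  show "norm (u + v) \<le> norm u + norm v"
    by transfer (clarsimp, smt (verit) norm_triangle_ineq abs_triangle_ineq)
  show "norm (r *\<^sub>R u) = \<bar>r\<bar> * norm u"
    by transfer (auto simp: abs_mult algebra_simps)
qed

end

instantiation unitization :: (real_normed_vector) real_normed_algebra_1
begin

lift_definition one_unitization :: "'a unitization" is "(0, 1)" .
lift_definition times_unitization :: "'a unitization \<Rightarrow> 'a unitization \<Rightarrow> 'a unitization"
  is "\<lambda>(a, r) (b, s). ((a o\<^sub>L b) + r *\<^sub>R b + s *\<^sub>R a, r * s)" .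

instance
proof
  fix u v w :: "'a unitization" and r :: real
  show "u * v * w = u * (v * w)"
    by transfer (auto simp: blinfun_compose_simps algebra_simps)
  show "1 * u = u" by transfer auto
  show "u * 1 = u" by transfer auto
  show "(u + v) * w = u * w + v * w"
    by transfer (auto simp: blinfun_compose_simps algebra_simps)
  show "u * (v + w) = u * v + u * w"
    by transfer (auto simp: blinfun_compose_simps algebra_simps)
  show "(0::'a unitization) \<noteq> 1" by transfer auto
  show "r *\<^sub>R u * v = r *\<^sub>R (u * v)"
    by transfer (auto simp: blinfun_compose_simps algebra_simps)
  show "u * r *\<^sub>R v = r *\<^sub>R (u * v)"
    by transfer (auto simp: blinfun_compose_simps algebra_simps)
  show "norm (1::'a unitization) = 1" by transfer auto
  show "norm (u * v) \<le> norm u * norm v"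
    by transfer (clarsimp simp: norm_unitization_mult_le)
qed

end

lift_definition op_part :: "'a::real_normed_vector unitization \<Rightarrow> ('a \<Rightarrow>\<^sub>L 'a)"
  is "fst :: ('a \<Rightarrow>\<^sub>L 'a) \<times> real \<Rightarrow> ('a \<Rightarrow>\<^sub>L 'a)" .
lift_definition scalar_part :: "'a::real_normed_vector unitization \<Rightarrow> real"
  is "snd :: ('a \<Rightarrow>\<^sub>L 'a) \<times> real \<Rightarrow> real" .
lift_definition of_op :: "('a::real_normed_vector \<Rightarrow>\<^sub>L 'a) \<Rightarrow> 'a unitization"
  is "\<lambda>a::'a \<Rightarrow>\<^sub>L 'a. (a, 0::real)" .
lift_definition to_op :: "'a::real_normed_vector unitization \<Rightarrow> ('a \<Rightarrow>\<^sub>L 'a)"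
  is "\<lambda>(a::'a \<Rightarrow>\<^sub>L 'a, r::real). a + r *\<^sub>R id_blinfun" .

lemma bounded_linear_op_part: "bounded_linear op_part"
  by (rule bounded_linear_intro[where K=1]; transfer) auto

lemma bounded_linear_scalar_part: "bounded_linear scalar_part"
  by (rule bounded_linear_intro[where K=1]; transfer) auto

lemma norm_op_part_scalar_part: "norm u = norm (op_part u) + \<bar>scalar_part u\<bar>"
  by transfer auto

instance unitization :: (banach) banach
proof
  fix X :: "nat \<Rightarrow> 'a unitization"
  assume X: "Cauchy X"
  obtain a where a: "(\<lambda>n. op_part (X n)) \<longlonglongrightarrow> a"
    using bounded_linear.Cauchy[OF bounded_linear_op_part X] Cauchy_convergent_iff convergent_def
    by blast
  obtain r where r: "(\<lambda>n. scalar_part (X n)) \<longlonglongrightarrow> r"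
    using bounded_linear.Cauchy[OF bounded_linear_scalar_part X] Cauchy_convergent_iff convergent_def
    by blast
  obtain u where u: "op_part u = a" "scalar_part u = r"
    by (metis op_part.abs_eq scalar_part.abs_eq fst_conv snd_conv)
  have "(\<lambda>n. norm (op_part (X n) - a) + \<bar>scalar_part (X n) - r\<bar>) \<longlonglongrightarrow> 0 + 0"
    by (intro tendsto_add tendsto_norm_zero tendsto_rabs_zero LIM_zero a r)
  moreover have "norm (X n - u) = norm (op_part (X n) - a) + \<bar>scalar_part (X n) - r\<bar>" for n
    using u by (simp add: norm_op_part_scalar_part linear_diff[OF bounded_linear.linear]
        bounded_linear_op_part bounded_linear_scalar_part)
  ultimately have "(\<lambda>n. norm (X n - u)) \<longlonglongrightarrow> 0"
    by simp
  then have "X \<longlonglongrightarrow> u"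
    by (simp add: tendsto_norm_zero_iff LIM_zero_iff)
  then show "convergent X"
    unfolding convergent_def by blast
qed

lemma to_op_of_op [simp]: "to_op (of_op a) = a"
  by transfer simp

lemma to_op_one [simp]: "to_op 1 = id_blinfun"
  by transfer simp

lemma to_op_mult: "to_op (u * v) = to_op u o\<^sub>L to_op v"
  by transfer (auto simp: blinfun_compose_simps algebra_simps)

lemma to_op_power: "to_op (u ^ n) = op_pow (to_op u) n"
  by (induction n) (simp_all add: to_op_mult)

lemma norm_to_op_le: "norm (to_op u) \<le> norm u"
proof transfer
  fix p :: "('a \<Rightarrow>\<^sub>L 'a) \<times> real"
  obtain a r where p: "p = (a, r)"
    by fastforce
  have "norm (a + r *\<^sub>R id_blinfun) \<le> norm a + \<bar>r\<bar> * norm (id_blinfun :: 'a \<Rightarrow>\<^sub>L 'a)"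
    by (metis norm_scaleR norm_triangle_ineq)
  also have "\<dots> \<le> norm a + \<bar>r\<bar>"
    using norm_blinfun_id_le mult_left_le[of _ "\<bar>r\<bar>"] by simp
  finally show "norm (case p of (a, r) \<Rightarrow> a + r *\<^sub>R id_blinfun) \<le> (case p of (a, r) \<Rightarrow> norm a + \<bar>r\<bar>)"
    by (simp add: p)
qed

lemma bounded_linear_to_op: "bounded_linear to_op"
proof (rule bounded_linear_intro[where K=1])
  fix u v :: "'a unitization" and r :: real
  show "to_op (u + v) = to_op u + to_op v"
    by transfer (auto simp: algebra_simps)
  show "to_op (r *\<^sub>R u) = r *\<^sub>R to_op u"
    by transfer (auto simp: algebra_simps)
  show "norm (to_op u) \<le> norm u * 1"
    using norm_to_op_le by simp
qed

lemma of_op_zero [simp]: "of_op 0 = 0"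
  by transfer simp

lemma of_op_add: "of_op (a + b) = of_op a + of_op b"
  by transfer simp

lemma of_op_scaleR: "of_op (r *\<^sub>R a) = r *\<^sub>R of_op a"
  by transfer simp

lemma of_op_mult: "of_op a * of_op b = of_op (a o\<^sub>L b)"
  by transfer simp

lemma norm_of_op [simp]: "norm (of_op a) = norm a"
  by transfer simp

section \<open>The operator exponential\<close>

lemma sums_to_op_exp:
  "(\<lambda>n. (1 / fact n) *\<^sub>R op_pow (to_op u) n) sums to_op (exp (u :: 'a::banach unitization))"
proof -
  have "(\<lambda>n. u ^ n /\<^sub>R fact n) sums exp u"
    unfolding exp_def by (rule summable_sums[OF summable_exp_generic])
  from bounded_linear.sums[OF bounded_linear_to_op this] show ?thesis
    by (simp add: to_op_power linear_scale[OF bounded_linear.linear[OF bounded_linear_to_op]]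
        divide_inverse_commute)
qed

lemma op_exp_eq_to_op_exp: "op_exp L = to_op (exp (of_op L))"
  using sums_to_op_exp[of "of_op L"] by (simp add: op_exp_def sums_iff)

lemma sums_op_exp: "(\<lambda>n. (1 / fact n) *\<^sub>R op_pow L n) sums op_exp (L::'a::banach \<Rightarrow>\<^sub>L 'a)"
  using sums_to_op_exp[of "of_op L"] by (simp add: op_exp_eq_to_op_exp)

lemma op_exp_zero [simp]: "op_exp (0 :: 'a::banach \<Rightarrow>\<^sub>L 'a) = id_blinfun"
  by (simp add: op_exp_eq_to_op_exp)

lemma norm_op_exp_le: "norm (op_exp (L::'a::banach \<Rightarrow>\<^sub>L 'a)) \<le> exp (norm L)"
  unfolding op_exp_eq_to_op_exp
  using norm_to_op_le[of "exp (of_op L)"] norm_exp[of "of_op L"] by simp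

lemma op_exp_add_commuting:
  fixes L M :: "'a::banach \<Rightarrow>\<^sub>L 'a"
  assumes "L o\<^sub>L M = M o\<^sub>L L"
  shows "op_exp (L + M) = op_exp L o\<^sub>L op_exp M"
proof -
  have "of_op L * of_op M = of_op M * of_op L"
    by (simp add: of_op_mult assms)
  then have "exp (of_op L + of_op M) = exp (of_op L) * exp (of_op M)"
    by (rule exp_add_commuting)
  then show ?thesis
    by (simp add: op_exp_eq_to_op_exp of_op_add to_op_mult)
qed

lemma has_vector_derivative_op_exp_scaleR:
  fixes L :: "'a::banach \<Rightarrow>\<^sub>L 'a"
  shows "((\<lambda>s. op_exp (s *\<^sub>R L)) has_vector_derivative op_exp (x *\<^sub>R L) o\<^sub>L L) (at x within T)"
proof -
  have "((\<lambda>s. to_op (exp (s *\<^sub>R of_op L))) has_vector_derivative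
      to_op (exp (x *\<^sub>R of_op L) * of_op L)) (at x within T)"
    by (rule bounded_linear.has_vector_derivative[OF bounded_linear_to_op
          exp_scaleR_has_vector_derivative_right])
  then show ?thesis
    by (simp add: op_exp_eq_to_op_exp of_op_scaleR to_op_mult)
qed

lemma op_exp_scaleR_commute:
  "op_exp (a *\<^sub>R L) o\<^sub>L op_exp (b *\<^sub>R L) = op_exp (b *\<^sub>R L) o\<^sub>L op_exp (a *\<^sub>R L)"
proof -
  have ab: "(a *\<^sub>R L) o\<^sub>L (b *\<^sub>R L) = (b *\<^sub>R L) o\<^sub>L (a *\<^sub>R L)"
    by (simp add: blinfun_compose_scaleR_left blinfun_compose_scaleR_right)
  show ?thesis
    using op_exp_add_commuting[OF ab] op_exp_add_commuting[OF ab[symmetric]] by (simp add: add.commute)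
qed

lemma op_exp_commute:
  fixes L A :: "'a::banach \<Rightarrow>\<^sub>L 'a"
  assumes "A o\<^sub>L L = L o\<^sub>L A"
  shows "A o\<^sub>L op_exp L = op_exp L o\<^sub>L A"
proof -
  have "(\<lambda>n. A o\<^sub>L ((1 / fact n) *\<^sub>R op_pow L n)) sums (A o\<^sub>L op_exp L)"
    by (rule bounded_linear.sums[OF bounded_linear_blinfun_compose_left sums_op_exp])
  moreover have "(\<lambda>n. ((1 / fact n) *\<^sub>R op_pow L n) o\<^sub>L A) sums (op_exp L o\<^sub>L A)"
    by (rule bounded_linear.sums[OF bounded_linear_blinfun_compose_right sums_op_exp])
  moreover have "A o\<^sub>L ((1 / fact n) *\<^sub>R op_pow L n) = ((1 / fact n) *\<^sub>R op_pow L n) o\<^sub>L A" for n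
    using op_pow_commute[OF assms] by (simp add: blinfun_compose_scaleR_left blinfun_compose_scaleR_right)
  ultimately show ?thesis
    by (simp add: sums_unique2)
qed

lemma selfadjointD: "selfadjoint A \<Longrightarrow> inner (A x) y = inner x (A y)"
  by (simp add: selfadjoint_def)

lemma selfadjoint_add: "selfadjoint A \<Longrightarrow> selfadjoint B \<Longrightarrow> selfadjoint (A + B)"
  by (simp add: selfadjoint_def blinfun.bilinear_simps inner_add_left inner_add_right)

lemma selfadjoint_diff: "selfadjoint A \<Longrightarrow> selfadjoint B \<Longrightarrow> selfadjoint (A - B)"
  by (simp add: selfadjoint_def blinfun.bilinear_simps inner_diff_left inner_diff_right)

lemma selfadjoint_scaleR: "selfadjoint A \<Longrightarrow> selfadjoint (r *\<^sub>R A)"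
  by (simp add: selfadjoint_def blinfun.bilinear_simps)

lemma selfadjoint_id: "selfadjoint id_blinfun"
  by (simp add: selfadjoint_def)

lemma selfadjoint_compose_commuting:
  "selfadjoint A \<Longrightarrow> selfadjoint B \<Longrightarrow> A o\<^sub>L B = B o\<^sub>L A \<Longrightarrow> selfadjoint (A o\<^sub>L B)"
  unfolding selfadjoint_def by (metis blinfun_apply_blinfun_compose)

lemma bounded_linear_inner_blinfun_apply_left:
  "bounded_linear (\<lambda>T::'a::real_inner \<Rightarrow>\<^sub>L 'a. inner (T x) y)"
  by (rule bounded_linear_compose[OF bounded_linear_inner_left blinfun.bounded_linear_left])

lemma bounded_linear_inner_blinfun_apply_right:
  "bounded_linear (\<lambda>T::'a::real_inner \<Rightarrow>\<^sub>L 'a. inner x (T y))"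
  by (rule bounded_linear_compose[OF bounded_linear_inner_right blinfun.bounded_linear_left])

lemma selfadjoint_sums:
  fixes f :: "nat \<Rightarrow> ('a::real_inner \<Rightarrow>\<^sub>L 'a)"
  assumes "f sums S" "\<And>n. selfadjoint (f n)"
  shows "selfadjoint S"
  unfolding selfadjoint_def
proof (intro allI)
  fix x y
  have "(\<lambda>n. inner (f n x) y) sums inner (S x) y"
    by (rule bounded_linear.sums[OF bounded_linear_inner_blinfun_apply_left assms(1)])
  moreover have "(\<lambda>n. inner x (f n y)) sums inner x (S y)"
    by (rule bounded_linear.sums[OF bounded_linear_inner_blinfun_apply_right assms(1)])
  ultimately show "inner (S x) y = inner x (S y)"
    using assms(2) by (simp add: selfadjointD sums_unique2)
qed

lemma selfadjoint_integral:
  fixes f :: "real \<Rightarrow> ('a::{real_inner,banach} \<Rightarrow>\<^sub>L 'a)"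
  assumes "f integrable_on S" "\<And>t. t \<in> S \<Longrightarrow> selfadjoint (f t)"
  shows "selfadjoint (integral S f)"
  unfolding selfadjoint_def
proof (intro allI)
  fix x y
  have "inner (integral S f x) y = integral S (\<lambda>t. inner (f t x) y)"
    using integral_linear[OF assms(1) bounded_linear_inner_blinfun_apply_left[of x y]]
    by (simp add: o_def)
  also have "\<dots> = integral S (\<lambda>t. inner x (f t y))"
    by (rule integral_cong) (simp add: selfadjointD[OF assms(2)])
  also have "\<dots> = inner x (integral S f y)"
    using integral_linear[OF assms(1) bounded_linear_inner_blinfun_apply_right[of x y]]
    by (simp add: o_def)
  finally show "inner (integral S f x) y = inner x (integral S f y)" .
qed

lemma blinfun_compose_integral_commute:
  fixes f :: "real \<Rightarrow> ('a::banach \<Rightarrow>\<^sub>L 'a)"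
  assumes "f integrable_on S" "\<And>t. t \<in> S \<Longrightarrow> X o\<^sub>L f t = f t o\<^sub>L X"
  shows "X o\<^sub>L integral S f = integral S f o\<^sub>L X"
proof -
  have "X o\<^sub>L integral S f = integral S (\<lambda>t. X o\<^sub>L f t)"
    using integral_linear[OF assms(1) bounded_linear_blinfun_compose_left[of X]]
    by (simp add: o_def)
  also have "\<dots> = integral S (\<lambda>t. f t o\<^sub>L X)"
    by (rule integral_cong) (simp add: assms(2))
  also have "\<dots> = integral S f o\<^sub>L X"
    using integral_linear[OF assms(1) bounded_linear_blinfun_compose_right[of X]]
    by (simp add: o_def)
  finally show ?thesis .
qed

lemma selfadjoint_op_pow: "selfadjoint L \<Longrightarrow> selfadjoint (op_pow L n)"
  by (induction n) (simp_all add: selfadjoint_id selfadjoint_compose_commuting op_pow_commute)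

lemma selfadjoint_op_exp:
  fixes L :: "'a::{real_inner,banach} \<Rightarrow>\<^sub>L 'a"
  shows "selfadjoint L \<Longrightarrow> selfadjoint (op_exp L)"
  by (rule selfadjoint_sums[OF sums_op_exp]) (simp add: selfadjoint_scaleR selfadjoint_op_pow)

lemma norm_selfadjoint_le_quadratic_form:
  fixes S :: "'a::real_inner \<Rightarrow>\<^sub>L 'a"
  assumes sa: "selfadjoint S" and w: "0 \<le> w" and q: "\<And>x. \<bar>inner (S x) x\<bar> \<le> w * (norm x)\<^sup>2"
  shows "norm S \<le> w"
proof (rule norm_blinfun_bound[OF w])
  fix x
  show "norm (S x) \<le> w * norm x"
  proof (cases "S x = 0")
    case False
    then have nS: "norm (S x) > 0"
      by simp
    define y where "y = (norm x / norm (S x)) *\<^sub>R S x"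
    have ny: "norm y = norm x"
      using nS by (simp add: y_def)
    have sxy: "inner (S x) y = norm x * norm (S x)"
      using nS by (simp add: y_def power2_norm_eq_inner[symmetric] power2_eq_square)
    have "4 * inner (S x) y = inner (S (x + y)) (x + y) - inner (S (x - y)) (x - y)"
      using selfadjointD[OF sa, of y x]
      by (simp add: blinfun.bilinear_simps inner_add_left inner_add_right
          inner_diff_left inner_diff_right inner_commute)
    also have "\<dots> \<le> w * (norm (x + y))\<^sup>2 + w * (norm (x - y))\<^sup>2"
      using q[of "x + y"] q[of "x - y"] by linarith
    also have "\<dots> = 2 * w * ((norm x)\<^sup>2 + (norm y)\<^sup>2)"
      by (simp add: power2_norm_eq_inner inner_add_left inner_add_right
          inner_diff_left inner_diff_right inner_commute algebra_simps)
    also have "\<dots> = 4 * (w * (norm x)\<^sup>2)"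
      using ny by simp
    finally have "norm x * norm (S x) \<le> norm x * (w * norm x)"
      using sxy by (simp add: power2_eq_square algebra_simps)
    then show ?thesis
      using nS by (cases "x = 0") auto
  qed (use w in simp)
qed

lemma norm_compose_selfadjoint_swap:
  fixes A B :: "'a::real_inner \<Rightarrow>\<^sub>L 'a"
  assumes "selfadjoint A" "selfadjoint B"
  shows "norm (B o\<^sub>L A) \<le> norm (A o\<^sub>L B)"
proof (rule norm_blinfun_bound)
  fix x
  define v where "v = B (A x)"
  have "(norm v)\<^sup>2 = inner x (A (B v))"
    using selfadjointD[OF assms(2)] selfadjointD[OF assms(1)]
    by (simp add: v_def power2_norm_eq_inner)
  also have "\<dots> \<le> norm x * (norm (A o\<^sub>L B) * norm v)"
    using norm_cauchy_schwarz[of x "A (B v)"] norm_blinfun[of "A o\<^sub>L B" v]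
    by (simp add: order_trans mult_left_mono)
  finally have "norm v * norm v \<le> norm v * (norm (A o\<^sub>L B) * norm x)"
    by (simp add: power2_eq_square algebra_simps)
  then show "norm ((B o\<^sub>L A) x) \<le> norm (A o\<^sub>L B) * norm x"
    by (cases "norm v = 0") (auto simp: v_def)
qed simp

section \<open>Coercive operators and their inverses\<close>

definition coercive :: "real \<Rightarrow> ('a::real_inner \<Rightarrow>\<^sub>L 'a) \<Rightarrow> bool" where
  "coercive c T \<longleftrightarrow> selfadjoint T \<and> op_ge_scalar T c \<and> 0 < c"

text \<open>Junk value when \<open>T\<close> has no two-sided inverse.\<close>

definition op_inverse :: "('a::real_normed_vector \<Rightarrow>\<^sub>L 'a) \<Rightarrow> ('a \<Rightarrow>\<^sub>L 'a)" where
  "op_inverse T = (THE S. S o\<^sub>L T = id_blinfun \<and> T o\<^sub>L S = id_blinfun)"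

lemma op_ge_scalarD: "op_ge_scalar A c \<Longrightarrow> c * (norm x)\<^sup>2 \<le> inner (A x) x"
  by (simp add: op_ge_scalar_def)

lemma coercive_mono: "coercive c T \<Longrightarrow> 0 < c' \<Longrightarrow> c' \<le> c \<Longrightarrow> coercive c' T"
  unfolding coercive_def op_ge_scalar_def by (meson mult_right_mono order_trans zero_le_power2)

lemma coercive_id: "0 < c \<Longrightarrow> c \<le> 1 \<Longrightarrow> coercive c id_blinfun"
  by (simp add: coercive_def op_ge_scalar_def selfadjoint_id power2_norm_eq_inner mult_left_le_one_le)

lemma coercive_id_plus:
  assumes "selfadjoint A" "op_ge_scalar A (- a)" "a < 1"
  shows "coercive (1 - a) (id_blinfun + A)"
  unfolding coercive_def op_ge_scalar_def
proof (intro conjI allI)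
  fix x
  have "inner ((id_blinfun + A) x) x = (norm x)\<^sup>2 + inner (A x) x"
    by (simp add: blinfun.bilinear_simps inner_add_left power2_norm_eq_inner)
  then show "(1 - a) * (norm x)\<^sup>2 \<le> inner ((id_blinfun + A) x) x"
    using op_ge_scalarD[OF assms(2), of x] by (simp add: algebra_simps)
qed (use assms in \<open>simp_all add: selfadjoint_add selfadjoint_id\<close>)

lemma coercive_convex_combination:
  assumes X: "coercive c X" and W: "coercive c W" and s: "s \<in> {0..1}"
  shows "coercive c (X + s *\<^sub>R (W - X))"
  unfolding coercive_def op_ge_scalar_def
proof (intro conjI allI)
  show "selfadjoint (X + s *\<^sub>R (W - X))"
    using X W by (simp add: coercive_def selfadjoint_add selfadjoint_scaleR selfadjoint_diff)
  show "0 < c"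
    using X by (simp add: coercive_def)
  fix z
  have "inner ((X + s *\<^sub>R (W - X)) z) z = (1 - s) * inner (X z) z + s * inner (W z) z"
    by (simp add: blinfun.bilinear_simps inner_add_left inner_diff_left algebra_simps)
  moreover have "(1 - s) * (c * (norm z)\<^sup>2) \<le> (1 - s) * inner (X z) z"
    using s X by (intro mult_left_mono) (auto simp: coercive_def op_ge_scalar_def)
  moreover have "s * (c * (norm z)\<^sup>2) \<le> s * inner (W z) z"
    using s W by (intro mult_left_mono) (auto simp: coercive_def op_ge_scalar_def)
  ultimately show "c * (norm z)\<^sup>2 \<le> inner ((X + s *\<^sub>R (W - X)) z) z"
    by (simp add: algebra_simps)
qed

lemma op_inverse_eq:
  assumes "S o\<^sub>L T = id_blinfun" "T o\<^sub>L S = id_blinfun"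
  shows "op_inverse T = S"
  unfolding op_inverse_def
proof (rule the_equality)
  fix S' assume "S' o\<^sub>L T = id_blinfun \<and> T o\<^sub>L S' = id_blinfun"
  then have "S' o\<^sub>L T = id_blinfun"
    by simp
  have "S' = S' o\<^sub>L (T o\<^sub>L S)"
    using assms by simp
  also have "\<dots> = (S' o\<^sub>L T) o\<^sub>L S"
    by (simp add: blinfun_compose_assoc)
  finally show "S' = S"
    using \<open>S' o\<^sub>L T = id_blinfun\<close> by simp
qed (use assms in simp)

lemma blinfun_inverse_diff:
  fixes S1 T1 S2 T2 :: "'a::real_normed_vector \<Rightarrow>\<^sub>L 'a"
  assumes "S1 o\<^sub>L T1 = id_blinfun" "T2 o\<^sub>L S2 = id_blinfun"
  shows "S1 - S2 = S1 o\<^sub>L ((T2 - T1) o\<^sub>L S2)"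
  using assms by (simp add: blinfun_compose_simps flip: blinfun_compose_assoc)

lemma blinfun_compose_eq_id_minus:
  "(id_blinfun + T) o\<^sub>L R = id_blinfun \<Longrightarrow> T o\<^sub>L R = id_blinfun - R"
  by (simp add: blinfun_compose_add_left eq_diff_eq add.commute)

lemma resolvent_diff_commuting:
  fixes X1 X2 R1 R2 :: "'a::real_normed_vector \<Rightarrow>\<^sub>L 'a"
  assumes R1: "R1 o\<^sub>L (id_blinfun + t *\<^sub>R X1) = id_blinfun"
    and R2: "(id_blinfun + t *\<^sub>R X2) o\<^sub>L R2 = id_blinfun"
    and comm: "X1 o\<^sub>L R1 = R1 o\<^sub>L X1" "X2 o\<^sub>L R1 = R1 o\<^sub>L X2" "X1 o\<^sub>L X2 = X2 o\<^sub>L X1"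
  shows "(X1 o\<^sub>L R1) - (X2 o\<^sub>L R2) = (X1 - X2) o\<^sub>L (R1 o\<^sub>L R2)"
proof -
  have middle: "(X1 o\<^sub>L (id_blinfun + t *\<^sub>R X2)) - ((id_blinfun + t *\<^sub>R X1) o\<^sub>L X2) = X1 - X2"
    by (simp add: blinfun_compose_simps comm(3))
  have "(X1 o\<^sub>L R1) - (X2 o\<^sub>L R2) =
      ((R1 o\<^sub>L X1) o\<^sub>L ((id_blinfun + t *\<^sub>R X2) o\<^sub>L R2)) -
      ((R1 o\<^sub>L (id_blinfun + t *\<^sub>R X1)) o\<^sub>L (X2 o\<^sub>L R2))"
    by (simp add: R1 R2 comm(1))
  also have "\<dots> = R1 o\<^sub>L (((X1 o\<^sub>L (id_blinfun + t *\<^sub>R X2)) - ((id_blinfun + t *\<^sub>R X1) o\<^sub>L X2)) o\<^sub>L R2)"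
    by (simp only: blinfun_compose_assoc blinfun_compose_diff_left blinfun_compose_diff_right)
  also have "\<dots> = (R1 o\<^sub>L (X1 - X2)) o\<^sub>L R2"
    by (simp add: middle blinfun_compose_assoc)
  also have "\<dots> = ((X1 - X2) o\<^sub>L R1) o\<^sub>L R2"
    using comm(1,2) by (simp add: blinfun_compose_diff_left blinfun_compose_diff_right)
  also have "\<dots> = (X1 - X2) o\<^sub>L (R1 o\<^sub>L R2)"
    by (rule blinfun_compose_assoc)
  finally show ?thesis .
qed

lemma neumann_series_inverse:
  fixes E :: "'a::banach \<Rightarrow>\<^sub>L 'a"
  assumes "norm E < 1"
  shows "\<exists>N. N o\<^sub>L (id_blinfun - E) = id_blinfun \<and> (id_blinfun - E) o\<^sub>L N = id_blinfun"
proof -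
  have "summable (op_pow E)"
  proof (rule summable_comparison_test)
    show "\<exists>N. \<forall>n\<ge>N. norm (op_pow E n) \<le> norm E ^ n"
      using norm_op_pow_le by blast
    show "summable (\<lambda>n. norm E ^ n)"
      using assms by (simp add: summable_geometric)
  qed
  then have sums: "op_pow E sums suminf (op_pow E)"
    by (rule summable_sums)
  have lim: "op_pow E \<longlonglongrightarrow> 0"
  proof (rule tendsto_norm_zero_cancel, rule Lim_null_comparison)
    show "\<forall>\<^sub>F n in sequentially. norm (norm (op_pow E n)) \<le> norm E ^ n"
      by (simp add: norm_op_pow_le)
    show "(\<lambda>n. norm E ^ n) \<longlonglongrightarrow> 0"
      using assms by (simp add: LIMSEQ_power_zero)
  qed
  have tel: "(\<lambda>n. op_pow E n - op_pow E (Suc n)) sums (op_pow E 0 - 0)"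
    by (rule telescope_sums'[OF lim])
  have left: "op_pow E n o\<^sub>L (id_blinfun - E) = op_pow E n - op_pow E (Suc n)" for n
    using op_pow_commute[of E E n] by (simp add: blinfun_compose_simps)
  have right: "(id_blinfun - E) o\<^sub>L op_pow E n = op_pow E n - op_pow E (Suc n)" for n
    by (simp add: blinfun_compose_simps)
  have "(\<lambda>n. op_pow E n - op_pow E (Suc n)) sums (suminf (op_pow E) o\<^sub>L (id_blinfun - E))"
    using bounded_linear.sums[OF bounded_linear_blinfun_compose_right[of "id_blinfun - E"] sums]
    unfolding left .
  moreover have "(\<lambda>n. op_pow E n - op_pow E (Suc n)) sums ((id_blinfun - E) o\<^sub>L suminf (op_pow E))"
    using bounded_linear.sums[OF bounded_linear_blinfun_compose_left[of "id_blinfun - E"] sums]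
    unfolding right .
  ultimately show ?thesis
    using sums_unique2[OF _ tel] by auto
qed

lemma norm_id_minus_coercive_le:
  fixes T :: "'a::real_inner \<Rightarrow>\<^sub>L 'a"
  assumes "coercive c T"
  shows "norm (id_blinfun - (1 / (norm T + c)) *\<^sub>R T) \<le> 1 - c / (norm T + c)"
proof -
  have sa: "selfadjoint T" and ge: "op_ge_scalar T c" and c: "0 < c"
    using assms by (auto simp: coercive_def)
  define M where "M = norm T + c"
  have M: "0 < M" "c \<le> M"
    using c by (auto simp: M_def add_nonneg_pos)
  have "norm (id_blinfun - (1 / M) *\<^sub>R T) \<le> 1 - c / M"
  proof (rule norm_selfadjoint_le_quadratic_form)
    show "selfadjoint (id_blinfun - (1 / M) *\<^sub>R T)"
      by (intro selfadjoint_diff selfadjoint_id selfadjoint_scaleR sa)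
    show "0 \<le> 1 - c / M"
      using M by simp
    fix x
    have "inner (T x) x \<le> norm (T x) * norm x"
      by (rule norm_cauchy_schwarz)
    also have "\<dots> \<le> norm T * norm x * norm x"
      using norm_blinfun[of T x] by (simp add: mult_right_mono)
    also have "\<dots> \<le> M * (norm x)\<^sup>2"
      using c by (simp add: M_def power2_eq_square algebra_simps)
    finally have "inner (T x) x / M \<le> (norm x)\<^sup>2"
      using M by (simp add: field_simps)
    moreover have "c * (norm x)\<^sup>2 / M \<le> inner (T x) x / M"
      using op_ge_scalarD[OF ge] M by (simp add: divide_right_mono)
    moreover have "inner ((id_blinfun - (1 / M) *\<^sub>R T) x) x = (norm x)\<^sup>2 - inner (T x) x / M"
      by (simp add: blinfun.bilinear_simps inner_diff_left power2_norm_eq_inner)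
    ultimately show "\<bar>inner ((id_blinfun - (1 / M) *\<^sub>R T) x) x\<bar> \<le> (1 - c / M) * (norm x)\<^sup>2"
      by (simp add: algebra_simps abs_le_iff)
  qed
  then show ?thesis
    by (simp add: M_def)
qed

lemma coercive_invertible:
  fixes T :: "'a::{real_inner,banach} \<Rightarrow>\<^sub>L 'a"
  assumes "coercive c T"
  shows "\<exists>S. S o\<^sub>L T = id_blinfun \<and> T o\<^sub>L S = id_blinfun"
proof -
  define M where "M = norm T + c"
  define E where "E = id_blinfun - (1 / M) *\<^sub>R T"
  have c: "0 < c"
    using assms by (simp add: coercive_def)
  then have M: "0 < M"
    by (simp add: M_def add_nonneg_pos)
  have "norm E \<le> 1 - c / M"
    using norm_id_minus_coercive_le[OF assms] by (simp add: E_def M_def)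
  also have "\<dots> < 1"
    using M c by simp
  finally obtain N where N: "N o\<^sub>L (id_blinfun - E) = id_blinfun" "(id_blinfun - E) o\<^sub>L N = id_blinfun"
    using neumann_series_inverse by blast
  have T: "T = M *\<^sub>R (id_blinfun - E)"
    using M by (simp add: E_def)
  show ?thesis
    using N M unfolding T by (intro exI[of _ "(1 / M) *\<^sub>R N"])
      (simp add: blinfun_compose_scaleR_left blinfun_compose_scaleR_right)
qed

lemma coercive_op_inverse:
  fixes T :: "'a::{real_inner,banach} \<Rightarrow>\<^sub>L 'a"
  assumes "coercive c T"
  shows "op_inverse T o\<^sub>L T = id_blinfun" "T o\<^sub>L op_inverse T = id_blinfun"
  using coercive_invertible[OF assms] op_inverse_eq by auto

lemma coercive_op_inverse_apply:
  fixes T :: "'a::{real_inner,banach} \<Rightarrow>\<^sub>L 'a"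
  assumes "coercive c T"
  shows "op_inverse T (T x) = x" "T (op_inverse T x) = x"
  using coercive_op_inverse[OF assms] by (metis blinfun_apply_blinfun_compose blinfun_apply_id_blinfun)+

lemma norm_op_inverse_le:
  fixes T :: "'a::{real_inner,banach} \<Rightarrow>\<^sub>L 'a"
  assumes "coercive c T"
  shows "norm (op_inverse T) \<le> 1 / c"
proof (rule norm_blinfun_bound)
  have c: "0 < c"
    using assms by (simp add: coercive_def)
  then show "0 \<le> 1 / c"
    by simp
  fix y
  define x where "x = op_inverse T y"
  have "c * (norm x)\<^sup>2 \<le> inner (T x) x"
    using assms by (simp add: coercive_def op_ge_scalarD)
  also have "\<dots> \<le> norm y * norm x"
    using Cauchy_Schwarz_ineq2[of y x] coercive_op_inverse_apply[OF assms] by (simp add: x_def)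
  finally have "c * norm x \<le> norm y"
    by (cases "x = 0") (auto simp: power2_eq_square)
  then show "norm (op_inverse T y) \<le> 1 / c * norm y"
    using c by (simp add: x_def field_simps)
qed

lemma selfadjoint_op_inverse:
  fixes T :: "'a::{real_inner,banach} \<Rightarrow>\<^sub>L 'a"
  assumes "coercive c T"
  shows "selfadjoint (op_inverse T)"
  unfolding selfadjoint_def
proof (intro allI)
  fix x y
  have "inner (op_inverse T x) y = inner (op_inverse T x) (T (op_inverse T y))"
    using coercive_op_inverse_apply[OF assms] by simp
  also have "\<dots> = inner (T (op_inverse T x)) (op_inverse T y)"
    using assms by (simp add: coercive_def selfadjointD)
  also have "\<dots> = inner x (op_inverse T y)"
    using coercive_op_inverse_apply[OF assms] by simp
  finally show "inner (op_inverse T x) y = inner x (op_inverse T y)" .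
qed

lemma op_inverse_commute:
  fixes T :: "'a::{real_inner,banach} \<Rightarrow>\<^sub>L 'a"
  assumes "coercive c T" "X o\<^sub>L T = T o\<^sub>L X"
  shows "X o\<^sub>L op_inverse T = op_inverse T o\<^sub>L X"
proof -
  note inv = coercive_op_inverse[OF assms(1)]
  have "X o\<^sub>L op_inverse T = (op_inverse T o\<^sub>L T) o\<^sub>L X o\<^sub>L op_inverse T"
    using inv by simp
  also have "\<dots> = op_inverse T o\<^sub>L (X o\<^sub>L T) o\<^sub>L op_inverse T"
    by (simp add: assms(2) blinfun_compose_assoc)
  also have "\<dots> = op_inverse T o\<^sub>L X o\<^sub>L (T o\<^sub>L op_inverse T)"
    by (simp add: blinfun_compose_assoc)
  finally show ?thesis
    using inv by simp
qed

lemma coercive_op_inverse_ge: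
  fixes T :: "'a::{real_inner,banach} \<Rightarrow>\<^sub>L 'a"
  assumes T: "coercive c T" and B: "norm T \<le> B" "0 < B"
  shows "op_ge_scalar (op_inverse T) (c / B\<^sup>2)"
  unfolding op_ge_scalar_def
proof
  fix v
  define w where "w = op_inverse T v"
  have v: "v = T w"
    using coercive_op_inverse_apply[OF T] by (simp add: w_def)
  have "norm v \<le> B * norm w"
    unfolding v using norm_blinfun[of T w] B by (meson mult_right_mono norm_ge_zero order_trans)
  then have "(norm v)\<^sup>2 \<le> B\<^sup>2 * (norm w)\<^sup>2"
    by (metis norm_ge_zero power_mono power_mult_distrib)
  have c: "0 < c"
    using T by (simp add: coercive_def)
  have "c * (norm v)\<^sup>2 \<le> c * (B\<^sup>2 * (norm w)\<^sup>2)"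
    using c \<open>(norm v)\<^sup>2 \<le> B\<^sup>2 * (norm w)\<^sup>2\<close> by simp
  also have "\<dots> = B\<^sup>2 * (c * (norm w)\<^sup>2)"
    by (simp add: algebra_simps)
  also have "\<dots> \<le> B\<^sup>2 * inner (op_inverse T v) v"
    unfolding w_def[symmetric] using T v op_ge_scalarD[of T c w]
    by (intro mult_left_mono) (simp_all add: coercive_def inner_commute)
  finally show "c / B\<^sup>2 * (norm v)\<^sup>2 \<le> inner (op_inverse T v) v"
    using B by (simp add: field_simps)
qed

lemma has_vector_derivative_iff_difference_quotient:
  fixes f :: "real \<Rightarrow> 'b::real_normed_vector"
  shows "(f has_vector_derivative D) (at x within S) \<longleftrightarrow>
    ((\<lambda>y. (f y - f x) /\<^sub>R (y - x)) \<longlongrightarrow> D) (at x within S)"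
proof -
  define A where "A y = (1 / norm (y - x)) *\<^sub>R (f y - (f x + (y - x) *\<^sub>R D))" for y
  define B where "B y = (f y - f x) /\<^sub>R (y - x) - D" for y
  have "norm (A y) = norm (B y)" if "y \<noteq> x" for y
  proof -
    have "(1 / (y - x)) *\<^sub>R (f y - (f x + (y - x) *\<^sub>R D)) =
        (1 / (y - x)) *\<^sub>R (f y - f x) - ((1 / (y - x)) * (y - x)) *\<^sub>R D"
      by (simp only: diff_diff_eq[symmetric] scaleR_diff_right scaleR_scaleR)
    also have "\<dots> = B y"
      using that by (simp add: B_def divide_inverse)
    finally have q: "(1 / (y - x)) *\<^sub>R (f y - (f x + (y - x) *\<^sub>R D)) = B y" .
    show ?thesis
      by (simp add: A_def flip: q)
  qed
  then have ev: "\<forall>\<^sub>F y in at x within S. norm (A y) = norm (B y)"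
    by (auto simp: eventually_at_filter)
  have "(f has_vector_derivative D) (at x within S) \<longleftrightarrow> (A \<longlongrightarrow> 0) (at x within S)"
    unfolding has_vector_derivative_def has_derivative_within A_def
    by (simp add: bounded_linear_scaleR_left)
  also have "\<dots> \<longleftrightarrow> ((\<lambda>y. norm (A y)) \<longlongrightarrow> 0) (at x within S)"
    by (rule tendsto_norm_zero_iff[symmetric])
  also have "\<dots> \<longleftrightarrow> ((\<lambda>y. norm (B y)) \<longlongrightarrow> 0) (at x within S)"
    by (rule tendsto_cong[OF ev])
  also have "\<dots> \<longleftrightarrow> (B \<longlongrightarrow> 0) (at x within S)"
    by (rule tendsto_norm_zero_iff)
  also have "\<dots> \<longleftrightarrow> ((\<lambda>y. (f y - f x) /\<^sub>R (y - x)) \<longlongrightarrow> D) (at x within S)"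
    unfolding B_def by (rule LIM_zero_iff)
  finally show ?thesis .
qed

lemma caratheodory_has_vector_derivative:
  fixes f g :: "real \<Rightarrow> 'b::real_normed_vector"
  assumes "\<And>y. y \<in> S \<Longrightarrow> f y - f x = (y - x) *\<^sub>R g y" and "continuous (at x within S) g"
  shows "(f has_vector_derivative g x) (at x within S)"
  unfolding has_vector_derivative_iff_difference_quotient
proof (rule tendsto_cong[THEN iffD1])
  show "\<forall>\<^sub>F y in at x within S. g y = (f y - f x) /\<^sub>R (y - x)"
    using assms(1) by (auto simp: eventually_at_filter)
  show "(g \<longlongrightarrow> g x) (at x within S)"
    using assms(2) by (simp add: continuous_within)
qed

lemma has_vector_derivative_caratheodoryE:
  fixes f :: "real \<Rightarrow> 'b::real_normed_vector"
  assumes "(f has_vector_derivative D) (at x within S)"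
  obtains g where "\<And>y. f y - f x = (y - x) *\<^sub>R g y" "continuous (at x within S) g" "g x = D"
proof
  define g where "g y = (if y = x then D else (f y - f x) /\<^sub>R (y - x))" for y
  show "f y - f x = (y - x) *\<^sub>R g y" for y
    by (simp add: g_def)
  show "g x = D"
    by (simp add: g_def)
  have "\<forall>\<^sub>F y in at x within S. (f y - f x) /\<^sub>R (y - x) = g y"
    by (simp add: g_def eventually_at_filter)
  moreover have "((\<lambda>y. (f y - f x) /\<^sub>R (y - x)) \<longlongrightarrow> D) (at x within S)"
    using assms by (simp add: has_vector_derivative_iff_difference_quotient)
  ultimately have "(g \<longlongrightarrow> D) (at x within S)"
    by (rule tendsto_cong[THEN iffD1])
  then show "continuous (at x within S) g"
    by (simp add: continuous_within g_def)
qed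

lemma has_integral_01_norm_le:
  fixes f :: "real \<Rightarrow> 'b::real_normed_vector"
  assumes "(f has_integral I) {0..1}" "\<And>t. t \<in> {0..1} \<Longrightarrow> norm (f t) \<le> B"
  shows "norm I \<le> B"
proof -
  have "0 \<le> B"
    using order_trans[OF norm_ge_zero assms(2)[of 0]] by simp
  with assms show ?thesis
    using has_integral_bound[of B f I 0 1] by simp
qed

section \<open>An integral representation of the logarithm\<close>

definition id_path :: "real \<Rightarrow> ('a::real_normed_vector \<Rightarrow>\<^sub>L 'a) \<Rightarrow> ('a \<Rightarrow>\<^sub>L 'a)" where
  "id_path t Y = id_blinfun + t *\<^sub>R (Y - id_blinfun)"

definition inv_path :: "real \<Rightarrow> ('a::real_normed_vector \<Rightarrow>\<^sub>L 'a) \<Rightarrow> ('a \<Rightarrow>\<^sub>L 'a)" where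
  "inv_path t Y = op_inverse (id_path t Y)"

text \<open>The operator version of \<open>log y = \<integral>\<^sub>0\<^sup>1 (y - 1) / (1 + t (y - 1)) dt\<close>.\<close>

definition log_integral :: "('a::{real_inner,banach} \<Rightarrow>\<^sub>L 'a) \<Rightarrow> ('a \<Rightarrow>\<^sub>L 'a)" where
  "log_integral Y = integral {0..1} (\<lambda>t. (Y - id_blinfun) o\<^sub>L inv_path t Y)"

text \<open>The operator version of
  \<open>(log y\<^sub>1 - log y\<^sub>2) / (y\<^sub>1 - y\<^sub>2) = \<integral>\<^sub>0\<^sup>1 dt / ((1 + t (y\<^sub>1 - 1)) (1 + t (y\<^sub>2 - 1)))\<close>.\<close>

definition log_divdiff :: "('a::{real_inner,banach} \<Rightarrow>\<^sub>L 'a) \<Rightarrow> ('a \<Rightarrow>\<^sub>L 'a) \<Rightarrow> ('a \<Rightarrow>\<^sub>L 'a)" where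
  "log_divdiff Y1 Y2 = integral {0..1} (\<lambda>t. inv_path t Y1 o\<^sub>L inv_path t Y2)"

lemma id_path_diff: "id_path s Y - id_path t Y = (s - t) *\<^sub>R (Y - id_blinfun)"
  by (simp add: id_path_def algebra_simps)

lemma id_path_diff_right: "id_path t Y1 - id_path t Y2 = t *\<^sub>R (Y1 - Y2)"
  by (simp add: id_path_def algebra_simps)

lemma id_path_commute: "X o\<^sub>L Y = Y o\<^sub>L X \<Longrightarrow> X o\<^sub>L id_path t Y = id_path t Y o\<^sub>L X"
  by (simp add: id_path_def blinfun_compose_simps)

lemma id_path_id_plus [simp]: "id_path t (id_blinfun + A) = id_blinfun + t *\<^sub>R A"
  by (simp add: id_path_def)

lemma coercive_id_path:
  assumes "coercive c Y" "c \<le> 1" "t \<in> {0..1}"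
  shows "coercive c (id_path t Y)"
proof -
  have "0 < c"
    using assms(1) by (simp add: coercive_def)
  then show ?thesis
    unfolding id_path_def using assms coercive_id coercive_convex_combination by blast
qed

lemma inv_path_1 [simp]: "inv_path 1 Y = op_inverse Y"
  by (simp add: inv_path_def id_path_def)

locale coercive_op =
  fixes c :: real and Y :: "'a::{real_inner,banach} \<Rightarrow>\<^sub>L 'a"
  assumes coercive: "coercive c Y" and c_le_1: "c \<le> 1"
begin

lemma c_pos: "0 < c"
  using coercive by (simp add: coercive_def)

lemma coercive_path: "t \<in> {0..1} \<Longrightarrow> coercive c (id_path t Y)"
  using coercive_id_path[OF coercive c_le_1] .

lemma inv_path_inverse:
  assumes "t \<in> {0..1}"
  shows "inv_path t Y o\<^sub>L id_path t Y = id_blinfun" "id_path t Y o\<^sub>L inv_path t Y = id_blinfun"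
  using coercive_op_inverse[OF coercive_path[OF assms]] by (simp_all add: inv_path_def)

lemma norm_inv_path_le: "t \<in> {0..1} \<Longrightarrow> norm (inv_path t Y) \<le> 1 / c"
  using norm_op_inverse_le[OF coercive_path] by (simp add: inv_path_def)

lemma selfadjoint_inv_path: "t \<in> {0..1} \<Longrightarrow> selfadjoint (inv_path t Y)"
  using selfadjoint_op_inverse[OF coercive_path] by (simp add: inv_path_def)

lemma inv_path_commute:
  "t \<in> {0..1} \<Longrightarrow> X o\<^sub>L Y = Y o\<^sub>L X \<Longrightarrow> X o\<^sub>L inv_path t Y = inv_path t Y o\<^sub>L X"
  unfolding inv_path_def by (rule op_inverse_commute[OF coercive_path id_path_commute])

lemma inv_path_diff:
  assumes "s \<in> {0..1}" "t \<in> {0..1}"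
  shows "inv_path s Y - inv_path t Y = (t - s) *\<^sub>R (inv_path s Y o\<^sub>L ((Y - id_blinfun) o\<^sub>L inv_path t Y))"
proof -
  have "inv_path s Y - inv_path t Y = inv_path s Y o\<^sub>L ((id_path t Y - id_path s Y) o\<^sub>L inv_path t Y)"
    by (rule blinfun_inverse_diff) (use inv_path_inverse assms in auto)
  then show ?thesis
    by (simp add: id_path_diff blinfun_compose_scaleR_left blinfun_compose_scaleR_right)
qed

lemma continuous_on_inv_path: "continuous_on {0..1} (\<lambda>t. inv_path t Y)"
proof (rule lipschitz_on_continuous_on)
  show "(norm (Y - id_blinfun) / c\<^sup>2)-lipschitz_on {0..1} (\<lambda>t. inv_path t Y)"
  proof (rule lipschitz_onI)
    fix s t :: real assume st: "s \<in> {0..1}" "t \<in> {0..1}"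
    have "norm (inv_path s Y - inv_path t Y) =
        \<bar>t - s\<bar> * norm (inv_path s Y o\<^sub>L ((Y - id_blinfun) o\<^sub>L inv_path t Y))"
      by (simp add: inv_path_diff[OF st])
    also have "\<dots> \<le> \<bar>t - s\<bar> * (1 / c * norm (Y - id_blinfun) * (1 / c))"
      using norm_inv_path_le[OF st(1)] norm_inv_path_le[OF st(2)] c_pos
      by (intro mult_left_mono order_trans[OF norm_blinfun_compose3] mult_mono) auto
    finally show "dist (inv_path s Y) (inv_path t Y) \<le> norm (Y - id_blinfun) / c\<^sup>2 * dist s t"
      by (simp add: dist_norm dist_real_def power2_eq_square abs_minus_commute field_simps)
  qed (use c_pos in simp)
qed

lemma has_vector_derivative_inv_path:
  assumes x: "x \<in> {0..1}"
  shows "((\<lambda>t. inv_path t Y) has_vector_derivative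
      - (inv_path x Y o\<^sub>L ((Y - id_blinfun) o\<^sub>L inv_path x Y))) (at x within {0..1})"
proof -
  define g where "g y = - (inv_path y Y o\<^sub>L ((Y - id_blinfun) o\<^sub>L inv_path x Y))" for y
  have "((\<lambda>t. inv_path t Y) has_vector_derivative g x) (at x within {0..1})"
  proof (rule caratheodory_has_vector_derivative)
    show "inv_path y Y - inv_path x Y = (y - x) *\<^sub>R g y" if "y \<in> {0..1}" for y
      using inv_path_diff[OF that x] by (simp add: g_def algebra_simps)
    have "continuous_on {0..1} g"
      unfolding g_def
      by (intro continuous_on_minus bounded_linear.continuous_on[OF
            bounded_linear_blinfun_compose_right continuous_on_inv_path])
    then show "continuous (at x within {0..1}) g"
      using x by (simp add: continuous_on_eq_continuous_within)
  qed
  then show ?thesis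
    by (simp add: g_def)
qed

lemma has_integral_log_integral:
  "((\<lambda>t. (Y - id_blinfun) o\<^sub>L inv_path t Y) has_integral log_integral Y) {0..1}"
  unfolding log_integral_def
  by (intro integrable_integral integrable_continuous_interval
      bounded_linear.continuous_on[OF bounded_linear_blinfun_compose_left continuous_on_inv_path])

lemma selfadjoint_log_integral: "selfadjoint (log_integral Y)"
  unfolding log_integral_def
proof (rule selfadjoint_integral)
  show "(\<lambda>t. (Y - id_blinfun) o\<^sub>L inv_path t Y) integrable_on {0..1}"
    using has_integral_log_integral by blast
  have "selfadjoint Y"
    using coercive by (simp add: coercive_def)
  then show "selfadjoint ((Y - id_blinfun) o\<^sub>L inv_path t Y)" if "t \<in> {0..1}" for t
    by (intro selfadjoint_compose_commuting selfadjoint_diff selfadjoint_id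
        selfadjoint_inv_path[OF that] inv_path_commute[OF that])
      (simp_all add: blinfun_compose_simps)
qed

lemma log_integral_commute:
  assumes "X o\<^sub>L Y = Y o\<^sub>L X"
  shows "X o\<^sub>L log_integral Y = log_integral Y o\<^sub>L X"
  unfolding log_integral_def
proof (rule blinfun_compose_integral_commute)
  show "(\<lambda>t. (Y - id_blinfun) o\<^sub>L inv_path t Y) integrable_on {0..1}"
    using has_integral_log_integral by blast
  fix t :: real assume t: "t \<in> {0..1}"
  have "X o\<^sub>L (Y - id_blinfun) = (Y - id_blinfun) o\<^sub>L X"
    using assms by (simp add: blinfun_compose_simps)
  then have "X o\<^sub>L ((Y - id_blinfun) o\<^sub>L inv_path t Y) = (Y - id_blinfun) o\<^sub>L (X o\<^sub>L inv_path t Y)"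
    by (metis blinfun_compose_assoc)
  then show "X o\<^sub>L ((Y - id_blinfun) o\<^sub>L inv_path t Y) = ((Y - id_blinfun) o\<^sub>L inv_path t Y) o\<^sub>L X"
    by (simp add: inv_path_commute[OF t assms] blinfun_compose_assoc)
qed

text \<open>\<open>t R\<^sub>t\<close> has derivative \<open>R\<^sub>t - t R\<^sub>t (Y - id) R\<^sub>t = R\<^sub>t\<^sup>2\<close>, where \<open>R\<^sub>t = inv_path t Y\<close>.\<close>

lemma log_divdiff_diag: "log_divdiff Y Y = op_inverse Y"
proof -
  have "((\<lambda>t. inv_path t Y o\<^sub>L inv_path t Y) has_integral (1 *\<^sub>R inv_path 1 Y - 0 *\<^sub>R inv_path 0 Y)) {0..1}"
  proof (rule fundamental_theorem_of_calculus)
    fix x :: real assume x: "x \<in> {0..1}"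
    have "((\<lambda>t. t *\<^sub>R inv_path t Y) has_vector_derivative
        x *\<^sub>R - (inv_path x Y o\<^sub>L ((Y - id_blinfun) o\<^sub>L inv_path x Y)) + 1 *\<^sub>R inv_path x Y)
        (at x within {0..1})"
      by (intro has_vector_derivative_scaleR has_vector_derivative_inv_path[OF x]
          derivative_eq_intros) simp
    moreover have "inv_path x Y o\<^sub>L inv_path x Y =
        x *\<^sub>R - (inv_path x Y o\<^sub>L ((Y - id_blinfun) o\<^sub>L inv_path x Y)) + 1 *\<^sub>R inv_path x Y"
    proof -
      have "inv_path x Y = inv_path x Y o\<^sub>L (id_path x Y o\<^sub>L inv_path x Y)"
        using inv_path_inverse[OF x] by simp
      then show ?thesis
        by (simp add: id_path_def blinfun_compose_simps algebra_simps)
    qed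
    ultimately show "((\<lambda>t. t *\<^sub>R inv_path t Y) has_vector_derivative
        inv_path x Y o\<^sub>L inv_path x Y) (at x within {0..1})"
      by simp
  qed simp
  then show ?thesis
    unfolding log_divdiff_def by (simp add: integral_unique)
qed

end

lemma log_integral_diff:
  assumes Y1: "coercive c Y1" and Y2: "coercive c Y2" and c: "c \<le> 1"
    and comm: "Y1 o\<^sub>L Y2 = Y2 o\<^sub>L Y1"
  shows "log_integral Y1 - log_integral Y2 = (Y1 - Y2) o\<^sub>L log_divdiff Y1 Y2"
proof -
  interpret A: coercive_op c Y1 using Y1 c by unfold_locales
  interpret B: coercive_op c Y2 using Y2 c by unfold_locales
  have "((\<lambda>t. ((Y1 - id_blinfun) o\<^sub>L inv_path t Y1) - ((Y2 - id_blinfun) o\<^sub>L inv_path t Y2))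
      has_integral (log_integral Y1 - log_integral Y2)) {0..1}"
    by (rule has_integral_diff[OF A.has_integral_log_integral B.has_integral_log_integral])
  moreover have "((Y1 - id_blinfun) o\<^sub>L inv_path t Y1) - ((Y2 - id_blinfun) o\<^sub>L inv_path t Y2) =
      (Y1 - Y2) o\<^sub>L (inv_path t Y1 o\<^sub>L inv_path t Y2)" if t: "t \<in> {0..1}" for t
  proof -
    have "(Y1 - id_blinfun) o\<^sub>L Y1 = Y1 o\<^sub>L (Y1 - id_blinfun)"
      "(Y2 - id_blinfun) o\<^sub>L Y1 = Y1 o\<^sub>L (Y2 - id_blinfun)"
      "(Y1 - id_blinfun) o\<^sub>L (Y2 - id_blinfun) = (Y2 - id_blinfun) o\<^sub>L (Y1 - id_blinfun)"
      using comm by (simp_all add: blinfun_compose_simps)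
    then show ?thesis
      using resolvent_diff_commuting[of "inv_path t Y1" t "Y1 - id_blinfun" "Y2 - id_blinfun"
          "inv_path t Y2"] A.inv_path_inverse[OF t] B.inv_path_inverse[OF t]
        A.inv_path_commute[OF t] by (simp add: id_path_def)
  qed
  ultimately have "((\<lambda>t. (Y1 - Y2) o\<^sub>L (inv_path t Y1 o\<^sub>L inv_path t Y2))
      has_integral (log_integral Y1 - log_integral Y2)) {0..1}"
    by (rule has_integral_eq[rotated]) simp
  moreover have "((\<lambda>t. (Y1 - Y2) o\<^sub>L (inv_path t Y1 o\<^sub>L inv_path t Y2))
      has_integral ((Y1 - Y2) o\<^sub>L log_divdiff Y1 Y2)) {0..1}"
    unfolding log_divdiff_def
    by (intro has_integral_linear[OF _ bounded_linear_blinfun_compose_left, unfolded o_def]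
        integrable_integral integrable_continuous_interval
        bounded_bilinear.continuous_on[OF bounded_bilinear_blinfun_compose
          A.continuous_on_inv_path B.continuous_on_inv_path])
  ultimately show ?thesis
    by (rule has_integral_unique)
qed

lemma norm_log_divdiff_diff_le:
  assumes Y1: "coercive c Y1" and Y2: "coercive c Y2" and c: "c \<le> 1"
  shows "norm (log_divdiff Y1 Y2 - log_divdiff Y2 Y2) \<le> norm (Y1 - Y2) / c ^ 3"
proof -
  interpret A: coercive_op c Y1 using Y1 c by unfold_locales
  interpret B: coercive_op c Y2 using Y2 c by unfold_locales
  have int: "(\<lambda>t. inv_path t Y1 o\<^sub>L inv_path t Y2) integrable_on {0..1}"
    "(\<lambda>t. inv_path t Y2 o\<^sub>L inv_path t Y2) integrable_on {0..1}"
    by (intro integrable_continuous_interval bounded_bilinear.continuous_on[OF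
          bounded_bilinear_blinfun_compose A.continuous_on_inv_path B.continuous_on_inv_path]
          bounded_bilinear.continuous_on[OF bounded_bilinear_blinfun_compose
          B.continuous_on_inv_path B.continuous_on_inv_path])+
  show ?thesis
  proof (rule has_integral_01_norm_le)
    show "((\<lambda>t. (inv_path t Y1 o\<^sub>L inv_path t Y2) - (inv_path t Y2 o\<^sub>L inv_path t Y2))
        has_integral (log_divdiff Y1 Y2 - log_divdiff Y2 Y2)) {0..1}"
      unfolding log_divdiff_def by (intro has_integral_diff integrable_integral int)
    fix t :: real assume t: "t \<in> {0..1}"
    have "inv_path t Y1 - inv_path t Y2 =
        inv_path t Y1 o\<^sub>L ((id_path t Y2 - id_path t Y1) o\<^sub>L inv_path t Y2)"
      by (rule blinfun_inverse_diff) (use A.inv_path_inverse[OF t] B.inv_path_inverse[OF t] in auto)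
    then have "(inv_path t Y1 o\<^sub>L inv_path t Y2) - (inv_path t Y2 o\<^sub>L inv_path t Y2) =
        t *\<^sub>R (inv_path t Y1 o\<^sub>L ((Y2 - Y1) o\<^sub>L (inv_path t Y2 o\<^sub>L inv_path t Y2)))"
      by (simp add: id_path_diff_right blinfun_compose_simps flip: blinfun_compose_diff_left)
    also have "norm \<dots> \<le> 1 * (1 / c * norm (Y2 - Y1) * (1 / c * (1 / c)))"
      using t A.norm_inv_path_le[OF t] B.norm_inv_path_le[OF t] A.c_pos
      by (simp only: norm_scaleR real_norm_def)
        (intro mult_mono order_trans[OF norm_blinfun_compose3] order_trans[OF norm_blinfun_compose];
          auto)
    finally show "norm ((inv_path t Y1 o\<^sub>L inv_path t Y2) - (inv_path t Y2 o\<^sub>L inv_path t Y2))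
        \<le> norm (Y1 - Y2) / c ^ 3"
      by (simp add: norm_minus_commute power3_eq_cube)
  qed
qed

lemma tendsto_log_divdiff:
  assumes lim: "(Y \<longlongrightarrow> Y x) (at x within S)" and Y: "\<And>s. s \<in> S \<Longrightarrow> coercive c (Y s)"
    and c: "c \<le> 1" and x: "x \<in> S"
  shows "((\<lambda>y. log_divdiff (Y y) (Y x)) \<longlongrightarrow> log_divdiff (Y x) (Y x)) (at x within S)"
proof -
  have bound: "((\<lambda>y. norm (Y y - Y x) / c ^ 3) \<longlongrightarrow> 0) (at x within S)"
    using lim by (intro tendsto_divide_zero tendsto_norm_zero LIM_zero)
  have "\<forall>\<^sub>F y in at x within S. y \<in> S"
    by (simp add: eventually_at_filter)
  then have le: "\<forall>\<^sub>F y in at x within S.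
      norm (norm (log_divdiff (Y y) (Y x) - log_divdiff (Y x) (Y x))) \<le> norm (Y y - Y x) / c ^ 3"
    by (rule eventually_mono) (simp add: norm_log_divdiff_diff_le[OF Y Y[OF x] c])
  show ?thesis
    by (rule tendsto_norm_zero_cancel[THEN LIM_zero_cancel, OF Lim_null_comparison[OF le bound]])
qed

lemma has_vector_derivative_log_integral:
  assumes Y: "\<And>s. s \<in> S \<Longrightarrow> coercive c (Y s)" and c: "c \<le> 1"
    and comm: "\<And>a b. a \<in> S \<Longrightarrow> b \<in> S \<Longrightarrow> Y a o\<^sub>L Y b = Y b o\<^sub>L Y a"
    and x: "x \<in> S" and Y': "(Y has_vector_derivative Y') (at x within S)"
  shows "((\<lambda>s. log_integral (Y s)) has_vector_derivative Y' o\<^sub>L op_inverse (Y x)) (at x within S)"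
proof -
  obtain G where G: "\<And>y. Y y - Y x = (y - x) *\<^sub>R G y" "continuous (at x within S) G" "G x = Y'"
    using has_vector_derivative_caratheodoryE[OF Y'] by blast
  define g where "g y = G y o\<^sub>L log_divdiff (Y y) (Y x)" for y
  have "((\<lambda>s. log_integral (Y s)) has_vector_derivative g x) (at x within S)"
  proof (rule caratheodory_has_vector_derivative)
    show "log_integral (Y y) - log_integral (Y x) = (y - x) *\<^sub>R g y" if "y \<in> S" for y
      using log_integral_diff[OF Y[OF that] Y[OF x] c comm[OF that x]]
      by (simp add: G(1) g_def blinfun_compose_scaleR_left)
    have "(Y \<longlongrightarrow> Y x) (at x within S)"
      using has_vector_derivative_continuous[OF Y'] by (simp add: continuous_within)
    then have "((\<lambda>y. log_divdiff (Y y) (Y x)) \<longlongrightarrow> log_divdiff (Y x) (Y x)) (at x within S)"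
      by (rule tendsto_log_divdiff) (use Y c x in auto)
    then show "continuous (at x within S) g"
      using G(2) unfolding g_def continuous_within
      by (intro bounded_bilinear.tendsto[OF bounded_bilinear_blinfun_compose])
  qed
  moreover have "g x = Y' o\<^sub>L op_inverse (Y x)"
    using coercive_op.log_divdiff_diag[of c "Y x"] Y[OF x] c by (simp add: g_def G(3) coercive_op_def)
  ultimately show ?thesis
    by simp
qed

section \<open>The integral is the self-adjoint logarithm\<close>

lemma log_integral_id [simp]: "log_integral id_blinfun = 0"
  by (simp add: log_integral_def)

text \<open>Write \<open>exp L = H\<^sup>2\<close> with \<open>H = exp (L/2)\<close> self-adjoint; then
  \<open>\<langle>exp L x, x\<rangle> = \<parallel>H x\<parallel>\<^sup>2\<close>, and \<open>\<parallel>x\<parallel> \<le> \<parallel>exp (-L/2)\<parallel> \<parallel>H x\<parallel> \<le> exp (\<parallel>L\<parallel>/2) \<parallel>H x\<parallel>\<close>.\<close>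

lemma coercive_op_exp:
  fixes L :: "'a::{real_inner,banach} \<Rightarrow>\<^sub>L 'a"
  assumes L: "selfadjoint L"
  shows "coercive (exp (- norm L)) (op_exp L)"
  unfolding coercive_def op_ge_scalar_def
proof (intro conjI allI)
  define H where "H = op_exp ((1/2) *\<^sub>R L)"
  define H' where "H' = op_exp (- ((1/2) *\<^sub>R L))"
  have "op_exp L = op_exp ((1/2) *\<^sub>R L + (1/2) *\<^sub>R L)"
    by (simp flip: scaleR_add_left)
  then have HH: "op_exp L = H o\<^sub>L H"
    unfolding H_def by (simp add: op_exp_add_commuting)
  have "H' o\<^sub>L H = op_exp (- ((1/2) *\<^sub>R L) + (1/2) *\<^sub>R L)"
    unfolding H_def H'_def
    by (rule op_exp_add_commuting[symmetric])
      (simp add: blinfun_compose_minus_left blinfun_compose_minus_right)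
  then have H'H: "H' (H x) = x" for x
    by (metis add.left_inverse op_exp_zero blinfun_apply_blinfun_compose blinfun_apply_id_blinfun)
  have H: "selfadjoint H"
    unfolding H_def by (intro selfadjoint_op_exp selfadjoint_scaleR L)
  show "selfadjoint (op_exp L)"
    by (rule selfadjoint_op_exp[OF L])
  show "0 < exp (- norm L)"
    by simp
  fix x
  have "norm x \<le> norm H' * norm (H x)"
    by (metis H'H norm_blinfun)
  also have "\<dots> \<le> exp (norm L / 2) * norm (H x)"
    using norm_op_exp_le[of "- ((1/2) *\<^sub>R L)"] by (simp add: H'_def mult_right_mono)
  finally have "(norm x)\<^sup>2 \<le> (exp (norm L / 2) * norm (H x))\<^sup>2"
    by (simp add: power_mono)
  also have "\<dots> = exp (norm L) * (norm (H x))\<^sup>2"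
    by (simp add: power_mult_distrib flip: exp_of_nat_mult)
  finally have "exp (- norm L) * (norm x)\<^sup>2 \<le> (norm (H x))\<^sup>2"
    by (simp add: exp_minus field_simps)
  also have "\<dots> = inner (op_exp L x) x"
    using selfadjointD[OF H, of "H x" x] by (simp add: HH power2_norm_eq_inner)
  finally show "exp (- norm L) * (norm x)\<^sup>2 \<le> inner (op_exp L x) x" .
qed

lemma log_integral_op_exp:
  fixes L :: "'a::{real_inner,banach} \<Rightarrow>\<^sub>L 'a"
  assumes L: "selfadjoint L"
  shows "log_integral (op_exp L) = L"
proof -
  define c where "c = exp (- norm L)"
  have c_le_1: "c \<le> 1"
    by (simp add: c_def)
  have exp_coercive: "coercive c (op_exp (s *\<^sub>R L))" if "s \<in> {0..1}" for s
  proof (rule coercive_mono[OF coercive_op_exp])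
    show "c \<le> exp (- norm (s *\<^sub>R L))"
      using that by (auto simp: c_def intro: mult_left_le_one_le)
  qed (simp_all add: c_def selfadjoint_scaleR L)
  have "((\<lambda>s::real. L) has_integral log_integral (op_exp (1 *\<^sub>R L)) - log_integral (op_exp (0 *\<^sub>R L))) {0..1}"
  proof (rule fundamental_theorem_of_calculus[where f="\<lambda>s. log_integral (op_exp (s *\<^sub>R L))"])
    fix x :: real assume x: "x \<in> {0..1}"
    have "((\<lambda>s. log_integral (op_exp (s *\<^sub>R L))) has_vector_derivative
        (op_exp (x *\<^sub>R L) o\<^sub>L L) o\<^sub>L op_inverse (op_exp (x *\<^sub>R L))) (at x within {0..1})"
      by (rule has_vector_derivative_log_integral[OF exp_coercive c_le_1 op_exp_scaleR_commute x
            has_vector_derivative_op_exp_scaleR])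
    moreover have "(op_exp (x *\<^sub>R L) o\<^sub>L L) o\<^sub>L op_inverse (op_exp (x *\<^sub>R L)) = L"
    proof -
      have LE: "L o\<^sub>L op_exp (x *\<^sub>R L) = op_exp (x *\<^sub>R L) o\<^sub>L L"
        by (rule op_exp_commute) (simp add: blinfun_compose_scaleR_left blinfun_compose_scaleR_right)
      show ?thesis
        using coercive_op_inverse(2)[OF exp_coercive[OF x]]
        by (simp add: blinfun_compose_assoc flip: LE)
    qed
    ultimately show "((\<lambda>s. log_integral (op_exp (s *\<^sub>R L))) has_vector_derivative L)
        (at x within {0..1})"
      by simp
  qed simp
  then show ?thesis
    using has_integral_const_real[of L 0 1] by (simp add: has_integral_unique)
qed

lemma selfadjoint_eq_0_if_has_integral_compose_0:
  fixes D :: "'a::{real_inner,banach} \<Rightarrow>\<^sub>L 'a" and F :: "real \<Rightarrow> ('a \<Rightarrow>\<^sub>L 'a)"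
  assumes int: "((\<lambda>s. D o\<^sub>L F s) has_integral 0) {0..1}" and D: "selfadjoint D"
    and F: "\<And>s. s \<in> {0..1} \<Longrightarrow> op_ge_scalar (F s) k" and k: "0 < k"
  shows "D = 0"
proof (rule blinfun_eqI)
  fix z
  have "((\<lambda>s. inner ((D o\<^sub>L F s) (D z)) z) has_integral inner ((0 :: 'a \<Rightarrow>\<^sub>L 'a) (D z)) z) {0..1}"
    using has_integral_linear[OF int bounded_linear_inner_blinfun_apply_left] by (simp add: o_def)
  then have upper: "((\<lambda>s. inner (F s (D z)) (D z)) has_integral 0) {0..1}"
    by (simp add: selfadjointD[OF D])
  have lower: "((\<lambda>s::real. k * (norm (D z))\<^sup>2) has_integral k * (norm (D z))\<^sup>2) {0..1}"
    using has_integral_const_real[of "k * (norm (D z))\<^sup>2" 0 1] by simp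
  have "k * (norm (D z))\<^sup>2 \<le> 0"
    by (rule has_integral_le[OF lower upper]) (simp add: F op_ge_scalarD)
  then show "D z = (0 :: 'a \<Rightarrow>\<^sub>L 'a) z"
    using k by (simp add: mult_le_0_iff)
qed

lemma has_integral_log_integral_segment:
  assumes X: "coercive c X" and W: "coercive c W" and c: "c \<le> 1"
    and comm: "X o\<^sub>L W = W o\<^sub>L X"
  shows "((\<lambda>s. (W - X) o\<^sub>L op_inverse (X + s *\<^sub>R (W - X))) has_integral
    log_integral W - log_integral X) {0..1}"
proof -
  define Y where "Y = (\<lambda>s::real. X + s *\<^sub>R (W - X))"
  have Y_coercive: "coercive c (Y s)" if "s \<in> {0..1}" for s
    unfolding Y_def using X W that by (rule coercive_convex_combination)
  have "X o\<^sub>L (W - X) = (W - X) o\<^sub>L X"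
    using comm by (simp add: blinfun_compose_simps)
  then have Y_commute: "Y a o\<^sub>L Y b = Y b o\<^sub>L Y a" for a b
    by (simp add: Y_def blinfun_compose_add_left blinfun_compose_add_right
        blinfun_compose_scaleR_left blinfun_compose_scaleR_right scaleR_add_right add_ac mult.commute)
  have "((\<lambda>s. (W - X) o\<^sub>L op_inverse (Y s)) has_integral log_integral (Y 1) - log_integral (Y 0)) {0..1}"
  proof (rule fundamental_theorem_of_calculus[where f="\<lambda>s. log_integral (Y s)"])
    fix x :: real assume x: "x \<in> {0..1}"
    have "(Y has_vector_derivative 0 + (x *\<^sub>R 0 + 1 *\<^sub>R (W - X))) (at x within {0..1})"
      unfolding Y_def
      by (intro has_vector_derivative_add has_vector_derivative_const has_vector_derivative_scaleR
          DERIV_ident)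
    then show "((\<lambda>s. log_integral (Y s)) has_vector_derivative (W - X) o\<^sub>L op_inverse (Y x))
        (at x within {0..1})"
      using has_vector_derivative_log_integral[OF Y_coercive c Y_commute x] by simp
  qed simp
  then show ?thesis
    by (simp add: Y_def)
qed

lemma log_integral_inj_commuting:
  assumes X: "coercive c X" and W: "coercive c W" and c: "c \<le> 1"
    and comm: "X o\<^sub>L W = W o\<^sub>L X" and eq: "log_integral X = log_integral W"
  shows "X = W"
proof -
  define B where "B = norm X + norm (W - X) + 1"
  have B: "0 < B"
    by (simp add: B_def add_nonneg_pos)
  have "((\<lambda>s. (W - X) o\<^sub>L op_inverse (X + s *\<^sub>R (W - X))) has_integral 0) {0..1}"
    using has_integral_log_integral_segment[OF X W c comm] by (simp add: eq)
  moreover have "selfadjoint (W - X)"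
    using X W by (simp add: coercive_def selfadjoint_diff)
  moreover have "op_ge_scalar (op_inverse (X + s *\<^sub>R (W - X))) (c / B\<^sup>2)" if s: "s \<in> {0..1}" for s
  proof (rule coercive_op_inverse_ge[OF coercive_convex_combination[OF X W s] _ B])
    have "norm (X + s *\<^sub>R (W - X)) \<le> norm X + norm (s *\<^sub>R (W - X))"
      by (rule norm_triangle_ineq)
    also have "\<dots> \<le> norm X + norm (W - X)"
      using s by (auto intro: mult_left_le_one_le)
    finally show "norm (X + s *\<^sub>R (W - X)) \<le> B"
      by (simp add: B_def)
  qed
  moreover have "0 < c / B\<^sup>2"
    using X B by (simp add: coercive_def)
  ultimately have "W - X = 0"
    by (rule selfadjoint_eq_0_if_has_integral_compose_0)
  then show ?thesis
    by simp
qed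

lemma op_exp_log_integral:
  fixes X :: "'a::{real_inner,banach} \<Rightarrow>\<^sub>L 'a"
  assumes X: "coercive c X" and c: "c \<le> 1"
  shows "op_exp (log_integral X) = X"
proof -
  interpret coercive_op c X
    using X c by unfold_locales
  define L where "L = log_integral X"
  have L: "selfadjoint L"
    unfolding L_def by (rule selfadjoint_log_integral)
  define c' where "c' = min c (exp (- norm L))"
  have "0 < c'"
    using X by (simp add: c'_def coercive_def)
  then have "coercive c' X" "coercive c' (op_exp L)"
    using coercive_mono[OF X] coercive_mono[OF coercive_op_exp[OF L]] by (simp_all add: c'_def)
  moreover have "c' \<le> 1"
    using c by (simp add: c'_def)
  moreover have "X o\<^sub>L op_exp L = op_exp L o\<^sub>L X"
    unfolding L_def by (rule op_exp_commute[OF log_integral_commute]) simp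
  moreover have "log_integral X = log_integral (op_exp L)"
    using log_integral_op_exp[OF L] unfolding L_def by simp
  ultimately have "X = op_exp L"
    by (rule log_integral_inj_commuting)
  then show ?thesis
    by (simp add: L_def)
qed

lemma op_log_eq_log_integral:
  fixes X :: "'a::{real_inner,banach} \<Rightarrow>\<^sub>L 'a"
  assumes X: "coercive c X" and c: "c \<le> 1"
  shows "op_log X = log_integral X"
  unfolding op_log_def
proof (rule the_equality)
  interpret coercive_op c X
    using X c by unfold_locales
  show "selfadjoint (log_integral X) \<and> op_exp (log_integral X) = X"
    using selfadjoint_log_integral op_exp_log_integral[OF X c] by simp
  show "L = log_integral X" if "selfadjoint L \<and> op_exp L = X" for L
    using that log_integral_op_exp by metis
qed

section \<open>The resolvent estimate\<close>

lemma resolvent_sum_identity: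
  fixes A B P Q S :: "'a::real_normed_vector \<Rightarrow>\<^sub>L 'a"
  assumes P: "(id_blinfun + t *\<^sub>R A) o\<^sub>L P = id_blinfun"
    and Q: "(id_blinfun + t *\<^sub>R B) o\<^sub>L Q = id_blinfun"
    and S: "S o\<^sub>L (id_blinfun + t *\<^sub>R (A + B)) = id_blinfun"
      "(id_blinfun + t *\<^sub>R (A + B)) o\<^sub>L S = id_blinfun"
    and AP: "A o\<^sub>L P = P o\<^sub>L A"
  shows "t *\<^sub>R (((A + B) o\<^sub>L S) - (A o\<^sub>L P) - (B o\<^sub>L Q)) =
    - (t\<^sup>2 *\<^sub>R ((S o\<^sub>L ((B o\<^sub>L A) o\<^sub>L (P o\<^sub>L Q))) + (P o\<^sub>L ((A o\<^sub>L B) o\<^sub>L Q))))"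
proof -
  have tP: "t *\<^sub>R (A o\<^sub>L P) = id_blinfun - P"
    using blinfun_compose_eq_id_minus[OF P] by (simp add: blinfun_compose_scaleR_left)
  have tQ: "t *\<^sub>R (B o\<^sub>L Q) = id_blinfun - Q"
    using blinfun_compose_eq_id_minus[OF Q] by (simp add: blinfun_compose_scaleR_left)
  have tS: "t *\<^sub>R ((A + B) o\<^sub>L S) = id_blinfun - S"
    using blinfun_compose_eq_id_minus[OF S(2)] by (simp add: blinfun_compose_scaleR_left)
  have "(id_blinfun - P) o\<^sub>L (id_blinfun - Q) = (t *\<^sub>R (A o\<^sub>L P)) o\<^sub>L (t *\<^sub>R (B o\<^sub>L Q))"
    by (simp only: tP tQ)
  also have "\<dots> = t\<^sup>2 *\<^sub>R (P o\<^sub>L ((A o\<^sub>L B) o\<^sub>L Q))"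
    by (simp add: AP power2_eq_square blinfun_compose_scaleR_left blinfun_compose_scaleR_right
        blinfun_compose_assoc flip: blinfun_compose_assoc[of A P])
  finally have PQ: "(id_blinfun - P) o\<^sub>L (id_blinfun - Q) = t\<^sup>2 *\<^sub>R (P o\<^sub>L ((A o\<^sub>L B) o\<^sub>L Q))" .
  have "((id_blinfun + t *\<^sub>R B) o\<^sub>L (id_blinfun + t *\<^sub>R A)) o\<^sub>L (P o\<^sub>L Q) = id_blinfun"
    using P Q by (simp add: blinfun_compose_assoc flip: blinfun_compose_assoc[of _ P Q])
  then have "S - (P o\<^sub>L Q) =
      S o\<^sub>L ((((id_blinfun + t *\<^sub>R B) o\<^sub>L (id_blinfun + t *\<^sub>R A)) - (id_blinfun + t *\<^sub>R (A + B))) o\<^sub>L (P o\<^sub>L Q))"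
    by (rule blinfun_inverse_diff[OF S(1)])
  also have "\<dots> = t\<^sup>2 *\<^sub>R (S o\<^sub>L ((B o\<^sub>L A) o\<^sub>L (P o\<^sub>L Q)))"
    by (simp add: blinfun_compose_simps power2_eq_square algebra_simps)
  finally have SPQ: "S - (P o\<^sub>L Q) = t\<^sup>2 *\<^sub>R (S o\<^sub>L ((B o\<^sub>L A) o\<^sub>L (P o\<^sub>L Q)))" .
  have "t *\<^sub>R (((A + B) o\<^sub>L S) - (A o\<^sub>L P) - (B o\<^sub>L Q)) =
      (id_blinfun - S) - (id_blinfun - P) - (id_blinfun - Q)"
    by (simp add: scaleR_diff_right tP tQ tS)
  also have "\<dots> = - (S - (P o\<^sub>L Q)) - ((id_blinfun - P) o\<^sub>L (id_blinfun - Q))"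
    by (simp add: blinfun_compose_diff_left blinfun_compose_diff_right)
  finally show ?thesis
    by (simp add: SPQ PQ scaleR_add_right)
qed

lemma norm_resolvent_sum_remainder_le:
  fixes A B P Q S :: "'a::real_normed_vector \<Rightarrow>\<^sub>L 'a"
  assumes norms: "norm P \<le> r" "norm Q \<le> r" "norm S \<le> r"
    and BA: "norm (B o\<^sub>L A) \<le> norm (A o\<^sub>L B)"
  shows "norm ((S o\<^sub>L ((B o\<^sub>L A) o\<^sub>L (P o\<^sub>L Q))) + (P o\<^sub>L ((A o\<^sub>L B) o\<^sub>L Q))) \<le> (r ^ 3 + r\<^sup>2) * norm (A o\<^sub>L B)"
proof -
  have r: "0 \<le> r"
    using norms(1) norm_ge_zero order_trans by blast
  have "norm (P o\<^sub>L Q) \<le> r * r"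
    using norms r by (intro order_trans[OF norm_blinfun_compose] mult_mono) auto
  then have "norm (S o\<^sub>L ((B o\<^sub>L A) o\<^sub>L (P o\<^sub>L Q))) \<le> r * norm (A o\<^sub>L B) * (r * r)"
    using norms BA r by (intro order_trans[OF norm_blinfun_compose3] mult_mono) auto
  moreover have "norm (P o\<^sub>L ((A o\<^sub>L B) o\<^sub>L Q)) \<le> r * norm (A o\<^sub>L B) * r"
    using norms r by (intro order_trans[OF norm_blinfun_compose3] mult_mono) auto
  ultimately show ?thesis
    by (intro order_trans[OF norm_triangle_ineq]) (simp add: power2_eq_square power3_eq_cube algebra_simps)
qed

lemma norm_resolvent_sum_diff_le:
  fixes A B P Q S :: "'a::real_normed_vector \<Rightarrow>\<^sub>L 'a"
  assumes P: "(id_blinfun + t *\<^sub>R A) o\<^sub>L P = id_blinfun"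
    and Q: "(id_blinfun + t *\<^sub>R B) o\<^sub>L Q = id_blinfun"
    and S: "S o\<^sub>L (id_blinfun + t *\<^sub>R (A + B)) = id_blinfun"
      "(id_blinfun + t *\<^sub>R (A + B)) o\<^sub>L S = id_blinfun"
    and AP: "A o\<^sub>L P = P o\<^sub>L A" and t: "t \<in> {0..1}"
    and norms: "norm P \<le> r" "norm Q \<le> r" "norm S \<le> r" and BA: "norm (B o\<^sub>L A) \<le> norm (A o\<^sub>L B)"
  shows "norm (((A + B) o\<^sub>L S) - (A o\<^sub>L P) - (B o\<^sub>L Q)) \<le> (r ^ 3 + r\<^sup>2) * norm (A o\<^sub>L B)"
proof (cases "t = 0")
  case True
  then have "P = id_blinfun" "Q = id_blinfun" "S = id_blinfun"
    using P Q S(1) by simp_all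
  moreover have "0 \<le> r"
    using norms(1) norm_ge_zero order_trans by blast
  ultimately show ?thesis
    by simp
next
  case False
  have "\<bar>t\<bar> * norm (((A + B) o\<^sub>L S) - (A o\<^sub>L P) - (B o\<^sub>L Q)) =
      \<bar>t\<bar> * (\<bar>t\<bar> * norm ((S o\<^sub>L ((B o\<^sub>L A) o\<^sub>L (P o\<^sub>L Q))) + (P o\<^sub>L ((A o\<^sub>L B) o\<^sub>L Q))))"
    using arg_cong[OF resolvent_sum_identity[OF P Q S AP], of norm]
    by (simp add: power2_eq_square abs_mult)
  then have "norm (((A + B) o\<^sub>L S) - (A o\<^sub>L P) - (B o\<^sub>L Q)) =
      \<bar>t\<bar> * norm ((S o\<^sub>L ((B o\<^sub>L A) o\<^sub>L (P o\<^sub>L Q))) + (P o\<^sub>L ((A o\<^sub>L B) o\<^sub>L Q)))"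
    using False by simp
  also have "\<dots> \<le> 1 * ((r ^ 3 + r\<^sup>2) * norm (A o\<^sub>L B))"
    using t norm_resolvent_sum_remainder_le[OF norms BA] by (intro mult_mono) auto
  finally show ?thesis
    by simp
qed

lemma norm_log_integral_sum_diff_le:
  fixes A B :: "'a::{real_inner,banach} \<Rightarrow>\<^sub>L 'a"
  assumes A: "selfadjoint A" "op_ge_scalar A (- a)" and B: "selfadjoint B" "op_ge_scalar B (- a)"
    and AB: "op_ge_scalar (A + B) (- a)" and a: "0 \<le> a" "a < 1"
  shows "norm (log_integral (id_blinfun + (A + B)) - log_integral (id_blinfun + A) -
      log_integral (id_blinfun + B)) \<le> ((1 / (1 - a)) ^ 3 + (1 / (1 - a))\<^sup>2) * norm (A o\<^sub>L B)"
proof -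
  interpret PA: coercive_op "1 - a" "id_blinfun + A"
    by (rule coercive_op.intro[OF coercive_id_plus[OF A a(2)]]) (use a in simp)
  interpret PB: coercive_op "1 - a" "id_blinfun + B"
    by (rule coercive_op.intro[OF coercive_id_plus[OF B a(2)]]) (use a in simp)
  interpret PS: coercive_op "1 - a" "id_blinfun + (A + B)"
    by (rule coercive_op.intro[OF coercive_id_plus[OF selfadjoint_add[OF A(1) B(1)] AB a(2)]]) (use a in simp)
  have "((\<lambda>t. ((A + B) o\<^sub>L inv_path t (id_blinfun + (A + B))) - (A o\<^sub>L inv_path t (id_blinfun + A)) -
      (B o\<^sub>L inv_path t (id_blinfun + B))) has_integral
      (log_integral (id_blinfun + (A + B)) - log_integral (id_blinfun + A) - log_integral (id_blinfun + B)))
      {0..1}"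
    using has_integral_diff[OF has_integral_diff[OF PS.has_integral_log_integral
          PA.has_integral_log_integral] PB.has_integral_log_integral]
    by simp
  then show ?thesis
  proof (rule has_integral_01_norm_le)
    fix t :: real assume t: "t \<in> {0..1}"
    have "A o\<^sub>L inv_path t (id_blinfun + A) = inv_path t (id_blinfun + A) o\<^sub>L A"
      by (rule PA.inv_path_commute[OF t]) (simp add: blinfun_compose_simps)
    then show "norm (((A + B) o\<^sub>L inv_path t (id_blinfun + (A + B))) - (A o\<^sub>L inv_path t (id_blinfun + A)) -
        (B o\<^sub>L inv_path t (id_blinfun + B))) \<le> ((1 / (1 - a)) ^ 3 + (1 / (1 - a))\<^sup>2) * norm (A o\<^sub>L B)"
      using PA.inv_path_inverse(2)[OF t] PB.inv_path_inverse(2)[OF t] PS.inv_path_inverse[OF t]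
      by (intro norm_resolvent_sum_diff_le[OF _ _ _ _ _ t PA.norm_inv_path_le[OF t]
            PB.norm_inv_path_le[OF t] PS.norm_inv_path_le[OF t] norm_compose_selfadjoint_swap[OF A(1) B(1)]])
        simp_all
  qed
qed

theorem mainTheorem16:
  "\<exists>C::real. \<forall>(A::'a::{real_inner,banach} \<Rightarrow>\<^sub>L 'a) B.
     selfadjoint A \<and> selfadjoint B \<and>
     op_ge_scalar A (-1/2) \<and> op_ge_scalar B (-1/2) \<and> op_ge_scalar (A + B) (-1/2) \<longrightarrow>
     norm (op_log (id_blinfun + A + B) - op_log (id_blinfun + A) - op_log (id_blinfun + B))
       \<le> C * norm (A o\<^sub>L B)"
proof (intro exI allI impI)
  fix A B :: "'a \<Rightarrow>\<^sub>L 'a"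
  assume "selfadjoint A \<and> selfadjoint B \<and>
    op_ge_scalar A (-1/2) \<and> op_ge_scalar B (-1/2) \<and> op_ge_scalar (A + B) (-1/2)"
  then have A: "selfadjoint A" "op_ge_scalar A (- (1/2))" and B: "selfadjoint B" "op_ge_scalar B (- (1/2))"
    and AB: "op_ge_scalar (A + B) (- (1/2))"
    by simp_all
  have "op_log (id_blinfun + A) = log_integral (id_blinfun + A)"
    "op_log (id_blinfun + B) = log_integral (id_blinfun + B)"
    "op_log (id_blinfun + (A + B)) = log_integral (id_blinfun + (A + B))"
    using coercive_id_plus[OF A] coercive_id_plus[OF B] coercive_id_plus[OF selfadjoint_add[OF A(1) B(1)] AB]
    by (simp_all add: op_log_eq_log_integral)
  then show "norm (op_log (id_blinfun + A + B) - op_log (id_blinfun + A) - op_log (id_blinfun + B))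
      \<le> 12 * norm (A o\<^sub>L B)"
    using norm_log_integral_sum_diff_le[OF A B AB] by (simp add: add.assoc)
qed

end
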